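(* Let $G=(V,\mathcal E,w)$ be an undirected, connected, weighted graph on $n$ nodes with Laplacian $L$. Fix one of the six uncertainty structures listed in the context, and fix a time-delay $\tau>0$. Suppose the agents are labeled $1,\dots,n$ so that, in the delay-free network ($\tau=0$) with Laplacian $L$, agent $i$ precedes agent $j$ in the order of precedence (i.e. has strictly larger centrality index) if and only if $i<j$. Similarly, suppose the links are labeled $1,\dots,|\mathcal E|$ so that, in the delay-free network, link $e$ has higher rank than link $f$ if and only if $e<f$. Then there exists $\alpha>0$ such that, in the network with all weights scaled by $\alpha$ (Laplacian $\alpha L$) and with time-delay $\tau$, agent $i$ has rank $i$ for every $i\in\{1,\dots,n\}$ and link $e$ has rank $e$ for every $e\in\{1,\dots,|\mathcal E|\}$. In other words, this network has the same order of precedence and ranking as the delay-free network with the same type of uncertainty.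
   Context: Graph matrices: - $E$ is the signed incidence matrix and $W=\mathrm{diag}(w(e))$. - $L=EWE^T$, $\Delta$ is the weighted-degree matrix, $A=\Delta-L$. - $M_n=I_n-\frac1n\mathbf1\mathbf1^T$. - $\lambda_n$ is the largest eigenvalue of the Laplacian in use; the network with delay $\tau$ and Laplacian $\alpha L$ is considered for $\tau\alpha\lambda_n(L)<\pi/2$. The network is $$\dot x(t)=-L\,x(t-\tau)+B\,\xi(t),\qquad y=M_nx,$$ with $\xi$ a vector of mutually independent zero-mean Gaussian white noises with intensities $\sigma_k^2$. The six uncertainty structures are: - agent-associated: dynamics $B=I_n$; sensor $B=L$; receiver $B=\Delta$; emitter $B=A$; - link-associated: communication $B=EW$; measurement $B=-E$. In each case $B$ is built from the (scaled) weights. The performance is $$\rho_{ss}=\lim_{t\to\infty}\mathbb E[y^Ty]=\frac1{2\pi}\int\mathrm{Tr}[G^HG]d\omega,\qquad G(s)=M_n(sI+e^{-\tau s}L)^{-1}B\,\mathrm{diag}(\sigma_k).$$ Agent centrality is $\eta_i=\partial\rho_{ss}/\partial\sigma_i^2$ and link centrality is $\nu_e=\partial\rho_{ss}/\partial\sigma_e^2$, defined for agent- and link-associated structures respectively. Agent $i$ precedes agent $j$ if $\eta_i>\eta_j$; link $e$ has higher rank than link $f$ if $\nu_e>\nu_f$. *)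

theory Defs
  imports "HOL-Analysis.Analysis" "Jordan_Normal_Form.Matrix" "Jordan_Normal_Form.Char_Poly"
    "Jordan_Normal_Form.Gauss_Jordan_Elimination"
begin

text \<open>Link e joins the nodes fst (ends e) and snd (ends e); this pair also fixes the
  (arbitrary) orientation used in the signed incidence matrix.\<close>

definition adjacent :: "nat \<Rightarrow> (nat \<Rightarrow> nat \<times> nat) \<Rightarrow> nat \<Rightarrow> nat \<Rightarrow> bool" where
  "adjacent m ends i j \<longleftrightarrow> (\<exists>e<m. {i, j} = {fst (ends e), snd (ends e)})"

definition connected_weighted_graph ::
  "nat \<Rightarrow> nat \<Rightarrow> (nat \<Rightarrow> nat \<times> nat) \<Rightarrow> (nat \<Rightarrow> real) \<Rightarrow> bool" where
  "connected_weighted_graph n m ends w \<longleftrightarrow>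
     0 < n \<and>
     (\<forall>e<m. fst (ends e) < n \<and> snd (ends e) < n \<and> fst (ends e) \<noteq> snd (ends e) \<and> 0 < w e) \<and>
     (\<forall>e<m. \<forall>f<m. e \<noteq> f \<longrightarrow>
        {fst (ends e), snd (ends e)} \<noteq> {fst (ends f), snd (ends f)}) \<and>
     (\<forall>i<n. \<forall>j<n. (adjacent m ends)\<^sup>*\<^sup>* i j)"

definition incidence :: "nat \<Rightarrow> nat \<Rightarrow> (nat \<Rightarrow> nat \<times> nat) \<Rightarrow> real mat" where
  "incidence n m ends = mat n m (\<lambda>(i, e).
     if i = fst (ends e) then 1 else if i = snd (ends e) then -1 else 0)"

definition weight_mat :: "nat \<Rightarrow> (nat \<Rightarrow> real) \<Rightarrow> real mat" where
  "weight_mat m w = mat_diag m w"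

definition laplacian :: "nat \<Rightarrow> nat \<Rightarrow> (nat \<Rightarrow> nat \<times> nat) \<Rightarrow> (nat \<Rightarrow> real) \<Rightarrow> real mat" where
  "laplacian n m ends w =
     incidence n m ends * weight_mat m w * transpose_mat (incidence n m ends)"

definition degree_mat :: "nat \<Rightarrow> nat \<Rightarrow> (nat \<Rightarrow> nat \<times> nat) \<Rightarrow> (nat \<Rightarrow> real) \<Rightarrow> real mat" where
  "degree_mat n m ends w = mat_diag n (\<lambda>i.
     (\<Sum>e<m. if i = fst (ends e) \<or> i = snd (ends e) then w e else 0))"

definition adjacency_mat :: "nat \<Rightarrow> nat \<Rightarrow> (nat \<Rightarrow> nat \<times> nat) \<Rightarrow> (nat \<Rightarrow> real) \<Rightarrow> real mat" where
  "adjacency_mat n m ends w = degree_mat n m ends w - laplacian n m ends w"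

definition centering :: "nat \<Rightarrow> real mat" where
  "centering n = 1\<^sub>m n - mat n n (\<lambda>_. 1 / real n)"

datatype uncertainty = Dynamics | Sensor | Receiver | Emitter | Communication | Measurement

definition agent_associated :: "uncertainty \<Rightarrow> bool" where
  "agent_associated s \<longleftrightarrow> s \<in> {Dynamics, Sensor, Receiver, Emitter}"

definition link_associated :: "uncertainty \<Rightarrow> bool" where
  "link_associated s \<longleftrightarrow> s \<in> {Communication, Measurement}"

definition noise_input ::
  "uncertainty \<Rightarrow> nat \<Rightarrow> nat \<Rightarrow> (nat \<Rightarrow> nat \<times> nat) \<Rightarrow> (nat \<Rightarrow> real) \<Rightarrow> real mat" where
  "noise_input s n m ends w = (case s of
      Dynamics \<Rightarrow> 1\<^sub>m n
    | Sensor \<Rightarrow> laplacian n m ends w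
    | Receiver \<Rightarrow> degree_mat n m ends w
    | Emitter \<Rightarrow> adjacency_mat n m ends w
    | Communication \<Rightarrow> incidence n m ends * weight_mat m w
    | Measurement \<Rightarrow> - incidence n m ends)"

definition cmat :: "real mat \<Rightarrow> complex mat" where
  "cmat A = map_mat complex_of_real A"

definition conj_transpose :: "complex mat \<Rightarrow> complex mat" where
  "conj_transpose A = mat (dim_col A) (dim_row A) (\<lambda>(i, j). cnj (A $$ (j, i)))"

definition mtrace :: "complex mat \<Rightarrow> complex" where
  "mtrace A = (\<Sum>i<dim_row A. A $$ (i, i))"

definition transfer ::
  "uncertainty \<Rightarrow> nat \<Rightarrow> nat \<Rightarrow> (nat \<Rightarrow> nat \<times> nat) \<Rightarrow> (nat \<Rightarrow> real) \<Rightarrow> real \<Rightarrow>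
   (nat \<Rightarrow> real) \<Rightarrow> real \<Rightarrow> complex mat" where
  "transfer s n m ends w \<tau> \<sigma> \<omega> =
     (let B = noise_input s n m ends w;
          jw = \<i> * complex_of_real \<omega>
      in cmat (centering n)
         * the (mat_inverse (jw \<cdot>\<^sub>m 1\<^sub>m n + exp (- complex_of_real \<tau> * jw) \<cdot>\<^sub>m cmat (laplacian n m ends w)))
         * cmat B * cmat (mat_diag (dim_col B) \<sigma>))"


definition rho_ss ::
  "uncertainty \<Rightarrow> nat \<Rightarrow> nat \<Rightarrow> (nat \<Rightarrow> nat \<times> nat) \<Rightarrow> (nat \<Rightarrow> real) \<Rightarrow> real \<Rightarrow> (nat \<Rightarrow> real) \<Rightarrow> real" where
  "rho_ss s n m ends w \<tau> \<sigma> = 1 / (2 * pi) * integral UNIV (\<lambda>\<omega>::real. Re (mtrace (conj_transpose (transfer s n m ends w \<tau> \<sigma> \<omega>) * transfer s n m ends w \<tau> \<sigma> \<omega>)))"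

text \<open>Centrality index of noise channel k: partial derivative of rho_ss with respect to
  the noise intensity sigma_k^2 (rho_ss is affine in each sigma_k^2, so the base point,
  here all intensities equal to 1, is immaterial). For agent-associated structures
  this is the agent centrality eta_k, for link-associated ones the link centrality nu_k.\<close>

definition centrality ::
  "uncertainty \<Rightarrow> nat \<Rightarrow> nat \<Rightarrow> (nat \<Rightarrow> nat \<times> nat) \<Rightarrow> (nat \<Rightarrow> real) \<Rightarrow> real \<Rightarrow> nat \<Rightarrow> real" where
  "centrality s n m ends w \<tau> k =
     deriv (\<lambda>v. rho_ss s n m ends w \<tau> ((\<lambda>_. 1)(k := sqrt v))) 1"

end

theory Submission
  imports Defs "HOL-Probability.Sinc_Integral"
begin

text \<open>Replacing \<open>w\<close> by \<open>\<alpha> w\<close> multiplies \<open>L\<close> by \<open>\<alpha>\<close>; substituting \<open>\<omega> = \<alpha> \<omega>'\<close> in the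
  frequency integral shows that each centrality index of the network \<open>(\<alpha> w, \<tau>)\<close> is one fixed
  positive multiple of the corresponding index of \<open>(w, \<alpha> \<tau>)\<close>. Hence it suffices that the
  centralities of \<open>(w, t)\<close> are continuous in the delay at \<open>t = 0\<close>. For \<open>\<omega> \<noteq> 0\<close> the integrand
  is continuous in \<open>(t, \<omega>)\<close>, and since \<open>L\<close> is coercive on zero-sum vectors it is bounded
  by \<open>C / (1 + \<omega>\<^sup>2)\<close> uniformly in small \<open>t\<close>, so dominated convergence applies. Strict
  inequalities between finitely many limits persist for small \<open>\<alpha>\<close>, and a small \<open>\<alpha>\<close> also
  gives \<open>\<tau> \<lambda>\<^sub>n(\<alpha> L) < \<pi>/2\<close>.\<close>

section \<open>The Laplacian quadratic form\<close>

definition valid_graph :: "nat \<Rightarrow> nat \<Rightarrow> (nat \<Rightarrow> nat \<times> nat) \<Rightarrow> bool" where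
  "valid_graph n m ends \<longleftrightarrow>
     (\<forall>e<m. fst (ends e) < n \<and> snd (ends e) < n \<and> fst (ends e) \<noteq> snd (ends e))"

definition edge_energy :: "nat \<Rightarrow> (nat \<Rightarrow> nat \<times> nat) \<Rightarrow> (nat \<Rightarrow> real) \<Rightarrow> (nat \<Rightarrow> complex) \<Rightarrow> real" where
  "edge_energy m ends w x = (\<Sum>e<m. w e * (cmod (x (fst (ends e)) - x (snd (ends e))))\<^sup>2)"

lemma incidence_dims [simp]:
  "dim_row (incidence n m ends) = n" "dim_col (incidence n m ends) = m"
  "incidence n m ends \<in> carrier_mat n m"
  by (auto simp: incidence_def)

lemma laplacian_dims [simp]:
  "dim_row (laplacian n m ends w) = n" "dim_col (laplacian n m ends w) = n"
  "laplacian n m ends w \<in> carrier_mat n n"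
  by (auto simp: laplacian_def weight_mat_def)

lemma laplacian_index:
  "i < n \<Longrightarrow> j < n \<Longrightarrow> laplacian n m ends w $$ (i,j) =
     (\<Sum>e<m. incidence n m ends $$ (i,e) * w e * incidence n m ends $$ (j,e))"
  unfolding laplacian_def weight_mat_def
  by (simp add: scalar_prod_def mat_diag_def mult_delta_right atLeast0LessThan cong: if_cong)

lemma laplacian_sym: "i < n \<Longrightarrow> j < n \<Longrightarrow> laplacian n m ends w $$ (i,j) = laplacian n m ends w $$ (j,i)"
  unfolding laplacian_index by (intro sum.cong refl) (simp add: mult.commute)

lemma laplacian_scale: "laplacian n m ends (\<lambda>e. \<alpha> * w e) = \<alpha> \<cdot>\<^sub>m laplacian n m ends w"
  by (rule eq_matI) (auto simp: laplacian_index sum_distrib_left mult_ac)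

lemma incidence_index:
  "valid_graph n m ends \<Longrightarrow> i < n \<Longrightarrow> e < m \<Longrightarrow> incidence n m ends $$ (i,e) =
     (if i = fst (ends e) then 1 else 0) - (if i = snd (ends e) then 1 else 0)"
  by (auto simp: incidence_def valid_graph_def)

lemma sum_mult_incidence_column:
  fixes f :: "nat \<Rightarrow> 'a::{real_algebra_1,comm_ring_1}"
  assumes v: "valid_graph n m ends" and e: "e < m"
  shows "(\<Sum>i<n. f i * of_real (incidence n m ends $$ (i,e))) = f (fst (ends e)) - f (snd (ends e))"
proof -
  have ends: "fst (ends e) < n" "snd (ends e) < n" using v e by (auto simp: valid_graph_def)
  have "(\<Sum>i<n. f i * of_real (incidence n m ends $$ (i,e))) =
     (\<Sum>i<n. (if i = fst (ends e) then f i else 0) - (if i = snd (ends e) then f i else 0))"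
    by (rule sum.cong) (auto simp: incidence_index[OF v _ e])
  also have "\<dots> = f (fst (ends e)) - f (snd (ends e))"
    using ends by (simp add: sum_subtractf)
  finally show ?thesis .
qed

lemma sum_mult_laplacian_column:
  fixes f :: "nat \<Rightarrow> 'a::{real_algebra_1,comm_ring_1}"
  assumes v: "valid_graph n m ends" and j: "j < n"
  shows "(\<Sum>i<n. f i * of_real (laplacian n m ends w $$ (i,j))) =
     (\<Sum>e<m. of_real (w e) * (f (fst (ends e)) - f (snd (ends e))) * of_real (incidence n m ends $$ (j,e)))"
proof -
  have "(\<Sum>i<n. f i * of_real (laplacian n m ends w $$ (i,j))) =
     (\<Sum>i<n. \<Sum>e<m. (f i * of_real (incidence n m ends $$ (i,e))) *
        (of_real (w e) * of_real (incidence n m ends $$ (j,e))))"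
    using j by (simp add: laplacian_index sum_distrib_left mult_ac)
  also have "\<dots> = (\<Sum>e<m. (\<Sum>i<n. f i * of_real (incidence n m ends $$ (i,e))) *
        (of_real (w e) * of_real (incidence n m ends $$ (j,e))))"
    by (subst sum.swap) (simp add: sum_distrib_right)
  also have "\<dots> = (\<Sum>e<m. of_real (w e) * (f (fst (ends e)) - f (snd (ends e))) *
        of_real (incidence n m ends $$ (j,e)))"
    by (rule sum.cong) (auto simp: sum_mult_incidence_column[OF v] mult_ac)
  finally show ?thesis .
qed

lemma laplacian_column_sum:
  assumes "valid_graph n m ends" and "j < n"
  shows "(\<Sum>i<n. (of_real (laplacian n m ends w $$ (i,j)) :: 'a::{real_algebra_1,comm_ring_1})) = 0"
  using sum_mult_laplacian_column[OF assms, of "\<lambda>_. 1 :: 'a" w] by simp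

lemma laplacian_bilinear_form:
  fixes f g :: "nat \<Rightarrow> 'a::{real_algebra_1,comm_ring_1}"
  assumes v: "valid_graph n m ends"
  shows "(\<Sum>i<n. \<Sum>j<n. f i * of_real (laplacian n m ends w $$ (i,j)) * g j) =
     (\<Sum>e<m. of_real (w e) * (f (fst (ends e)) - f (snd (ends e))) * (g (fst (ends e)) - g (snd (ends e))))"
proof -
  have "(\<Sum>i<n. \<Sum>j<n. f i * of_real (laplacian n m ends w $$ (i,j)) * g j) =
        (\<Sum>j<n. (\<Sum>i<n. f i * of_real (laplacian n m ends w $$ (i,j))) * g j)"
    by (subst sum.swap) (simp add: sum_distrib_right)
  also have "\<dots> = (\<Sum>j<n. \<Sum>e<m. (of_real (w e) * (f (fst (ends e)) - f (snd (ends e)))) *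
        (g j * of_real (incidence n m ends $$ (j,e))))"
    by (rule sum.cong) (auto simp: sum_mult_laplacian_column[OF v] sum_distrib_right sum_distrib_left mult_ac)
  also have "\<dots> = (\<Sum>e<m. (of_real (w e) * (f (fst (ends e)) - f (snd (ends e)))) *
        (\<Sum>j<n. g j * of_real (incidence n m ends $$ (j,e))))"
    by (subst sum.swap) (simp add: sum_distrib_left)
  also have "\<dots> = (\<Sum>e<m. of_real (w e) * (f (fst (ends e)) - f (snd (ends e))) * (g (fst (ends e)) - g (snd (ends e))))"
    by (rule sum.cong) (auto simp: sum_mult_incidence_column[OF v])
  finally show ?thesis .
qed

lemma cnj_mult_self: "cnj z * z = complex_of_real ((cmod z)\<^sup>2)"
  by (metis complex_norm_square mult.commute of_real_power)

lemma laplacian_quadratic_form: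
  fixes x :: "nat \<Rightarrow> complex"
  assumes v: "valid_graph n m ends"
  shows "(\<Sum>i<n. \<Sum>j<n. cnj (x i) * of_real (laplacian n m ends w $$ (i,j)) * x j) =
    of_real (edge_energy m ends w x)"
proof -
  have "(\<Sum>i<n. \<Sum>j<n. cnj (x i) * of_real (laplacian n m ends w $$ (i,j)) * x j) =
    (\<Sum>e<m. of_real (w e) * (cnj (x (fst (ends e))) - cnj (x (snd (ends e)))) *
       (x (fst (ends e)) - x (snd (ends e))))"
    by (rule laplacian_bilinear_form[OF v])
  also have "\<dots> = (\<Sum>e<m. of_real (w e * (cmod (x (fst (ends e)) - x (snd (ends e))))\<^sup>2))"
    by (intro sum.cong refl) (simp add: mult.assoc cnj_mult_self flip: complex_cnj_diff)
  finally show ?thesis by (simp add: edge_energy_def)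
qed

lemma edge_energy_nonneg: "(\<And>e. e < m \<Longrightarrow> 0 \<le> w e) \<Longrightarrow> 0 \<le> edge_energy m ends w x"
  unfolding edge_energy_def by (intro sum_nonneg) auto

lemma edge_energy_scale: "edge_energy m ends (\<lambda>e. \<alpha> * w e) x = \<alpha> * edge_energy m ends w x"
  by (simp add: edge_energy_def sum_distrib_left mult.assoc)

lemma cmod_add_squared_le: "(cmod (u + v))\<^sup>2 \<le> 2 * (cmod u)\<^sup>2 + 2 * (cmod v)\<^sup>2"
proof -
  have "(cmod (u + v))\<^sup>2 \<le> (cmod u + cmod v)\<^sup>2" by (simp add: power_mono norm_triangle_ineq)
  also have "\<dots> \<le> 2 * (cmod u)\<^sup>2 + 2 * (cmod v)\<^sup>2"
    using sum_squares_ge_zero[of "cmod u - cmod v" 0] by (simp add: power2_eq_square algebra_simps)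
  finally show ?thesis .
qed

lemma edge_energy_le:
  assumes v: "valid_graph n m ends" and w: "\<And>e. e < m \<Longrightarrow> 0 \<le> w e"
  shows "edge_energy m ends w x \<le> 2 * (\<Sum>e<m. w e) * (\<Sum>i<n. (cmod (x i))\<^sup>2)"
proof -
  have "edge_energy m ends w x \<le> (\<Sum>e<m. w e * (2 * (\<Sum>i<n. (cmod (x i))\<^sup>2)))"
    unfolding edge_energy_def
  proof (intro sum_mono mult_left_mono)
    fix e assume e: "e \<in> {..<m}"
    let ?a = "fst (ends e)" and ?b = "snd (ends e)"
    have ab: "?a < n" "?b < n" "?a \<noteq> ?b" using v e by (auto simp: valid_graph_def)
    have "(cmod (x ?a - x ?b))\<^sup>2 \<le> 2 * ((cmod (x ?a))\<^sup>2 + (cmod (x ?b))\<^sup>2)"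
      using cmod_add_squared_le[of "x ?a" "- x ?b"] by simp
    also have "(cmod (x ?a))\<^sup>2 + (cmod (x ?b))\<^sup>2 = (\<Sum>i\<in>{?a, ?b}. (cmod (x i))\<^sup>2)"
      using ab by simp
    also have "\<dots> \<le> (\<Sum>i<n. (cmod (x i))\<^sup>2)"
      by (rule sum_mono2) (use ab in auto)
    finally show "(cmod (x ?a - x ?b))\<^sup>2 \<le> 2 * (\<Sum>i<n. (cmod (x i))\<^sup>2)" by simp
    show "0 \<le> w e" using w e by auto
  qed
  also have "\<dots> = 2 * (\<Sum>e<m. w e) * (\<Sum>i<n. (cmod (x i))\<^sup>2)"
    by (simp add: sum_distrib_right[symmetric] mult_ac)
  finally show ?thesis .
qed

lemma walk_energy_bound:
  assumes pos: "\<And>e. e < m \<Longrightarrow> 0 < w e" and walk: "(adjacent m ends)\<^sup>*\<^sup>* i j"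
  shows "\<exists>C\<ge>0. \<forall>x. (cmod (x i - x j))\<^sup>2 \<le> C * edge_energy m ends w x"
  using walk
proof (induction rule: rtranclp_induct)
  case base
  then show ?case by (auto intro!: exI[of _ 0])
next
  case (step j k)
  from step.IH obtain C where C: "C \<ge> 0" "\<And>x. (cmod (x i - x j))\<^sup>2 \<le> C * edge_energy m ends w x"
    by blast
  from step.hyps(2) obtain e where e: "e < m" "{j, k} = {fst (ends e), snd (ends e)}"
    unfolding adjacent_def by blast
  have we: "0 < w e" using pos e by auto
  have jk: "(cmod (x j - x k))\<^sup>2 \<le> (1 / w e) * edge_energy m ends w x" for x
  proof -
    have eq: "cmod (x j - x k) = cmod (x (fst (ends e)) - x (snd (ends e)))"
      using e(2) by (auto simp: doubleton_eq_iff norm_minus_commute)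
    have "w e * (cmod (x (fst (ends e)) - x (snd (ends e))))\<^sup>2 \<le> edge_energy m ends w x"
      unfolding edge_energy_def
      by (rule member_le_sum[where f = "\<lambda>e. w e * (cmod (x (fst (ends e)) - x (snd (ends e))))\<^sup>2"])
         (use e in \<open>auto intro: mult_nonneg_nonneg less_imp_le[OF pos]\<close>)
    then show ?thesis using we by (simp add: eq field_simps)
  qed
  show ?case
  proof (intro exI[of _ "2 * C + 2 / w e"] conjI allI)
    show "0 \<le> 2 * C + 2 / w e" using C we by simp
    fix x :: "nat \<Rightarrow> complex"
    have "(cmod (x i - x k))\<^sup>2 = (cmod ((x i - x j) + (x j - x k)))\<^sup>2" by simp
    also have "\<dots> \<le> 2 * (cmod (x i - x j))\<^sup>2 + 2 * (cmod (x j - x k))\<^sup>2" by (rule cmod_add_squared_le)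
    also have "\<dots> \<le> 2 * (C * edge_energy m ends w x) + 2 * ((1 / w e) * edge_energy m ends w x)"
      using C(2)[of x] jk[of x] by linarith
    also have "\<dots> = (2 * C + 2 / w e) * edge_energy m ends w x" by (simp add: algebra_simps)
    finally show "(cmod (x i - x k))\<^sup>2 \<le> (2 * C + 2 / w e) * edge_energy m ends w x" .
  qed
qed

lemma sum_pairs_diff_squared:
  fixes u :: "nat \<Rightarrow> real"
  shows "(\<Sum>i<n. \<Sum>j<n. (u i - u j)\<^sup>2) = 2 * real n * (\<Sum>i<n. (u i)\<^sup>2) - 2 * (\<Sum>i<n. u i)\<^sup>2"
proof -
  have "(\<Sum>i<n. \<Sum>j<n. (u i - u j)\<^sup>2) = (\<Sum>i<n. \<Sum>j<n. (u i)\<^sup>2 + (u j)\<^sup>2 - 2 * (u i * u j))"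
    by (simp add: power2_diff mult.assoc)
  also have "\<dots> = 2 * real n * (\<Sum>i<n. (u i)\<^sup>2) - 2 * (\<Sum>i<n. u i * (\<Sum>j<n. u j))"
    by (simp add: sum.distrib sum_subtractf sum_distrib_left mult.assoc)
  also have "(\<Sum>i<n. u i * (\<Sum>j<n. u j)) = (\<Sum>i<n. u i)\<^sup>2"
    by (simp add: power2_eq_square sum_distrib_right)
  finally show ?thesis .
qed

lemma sum_pairs_cmod_diff_squared:
  fixes x :: "nat \<Rightarrow> complex"
  assumes "(\<Sum>i<n. x i) = 0"
  shows "(\<Sum>i<n. \<Sum>j<n. (cmod (x i - x j))\<^sup>2) = 2 * real n * (\<Sum>i<n. (cmod (x i))\<^sup>2)"
proof -
  have re: "(\<Sum>i<n. Re (x i)) = 0" and im: "(\<Sum>i<n. Im (x i)) = 0"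
    using arg_cong[OF assms, of Re] arg_cong[OF assms, of Im] by (simp_all add: Re_sum Im_sum)
  have "(\<Sum>i<n. \<Sum>j<n. (cmod (x i - x j))\<^sup>2) =
     (\<Sum>i<n. \<Sum>j<n. (Re (x i) - Re (x j))\<^sup>2) + (\<Sum>i<n. \<Sum>j<n. (Im (x i) - Im (x j))\<^sup>2)"
    by (simp add: cmod_power2 sum.distrib)
  also have "\<dots> = 2 * real n * (\<Sum>i<n. (cmod (x i))\<^sup>2)"
    unfolding sum_pairs_diff_squared re im by (simp add: cmod_power2 sum.distrib algebra_simps)
  finally show ?thesis .
qed

text \<open>Each \<open>|x\<^sub>i - x\<^sub>j|\<^sup>2\<close> is controlled along a walk from \<open>i\<close> to \<open>j\<close>; summing over all pairs
  gives \<open>2 n |x|\<^sup>2\<close> when \<open>\<Sum> x = 0\<close>.\<close>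

lemma edge_energy_coercive:
  assumes g: "connected_weighted_graph n m ends w"
  shows "\<exists>\<kappa>>0. \<forall>x. (\<Sum>i<n. x i) = 0 \<longrightarrow> \<kappa> * (\<Sum>i<n. (cmod (x i))\<^sup>2) \<le> edge_energy m ends w x"
proof -
  have pos: "\<And>e. e < m \<Longrightarrow> 0 < w e" and n: "0 < n"
    and conn: "\<And>i j. i < n \<Longrightarrow> j < n \<Longrightarrow> (adjacent m ends)\<^sup>*\<^sup>* i j"
    using g unfolding connected_weighted_graph_def by auto
  have "\<forall>p\<in>{..<n}\<times>{..<n}. \<exists>C\<ge>0. \<forall>x. (cmod (x (fst p) - x (snd p)))\<^sup>2 \<le> C * edge_energy m ends w x"
    using walk_energy_bound[OF pos conn] by auto
  then obtain Cf where Cf: "\<And>p. p \<in> {..<n}\<times>{..<n} \<Longrightarrow> Cf p \<ge> 0 \<and>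
      (\<forall>x. (cmod (x (fst p) - x (snd p)))\<^sup>2 \<le> Cf p * edge_energy m ends w x)"
    by metis
  define C where "C = (\<Sum>p\<in>{..<n}\<times>{..<n}. Cf p)"
  have C0: "C \<ge> 0" unfolding C_def using Cf by (intro sum_nonneg) auto
  have Cle: "Cf p \<le> C" if "p \<in> {..<n}\<times>{..<n}" for p
    unfolding C_def by (rule member_le_sum) (use Cf that in auto)
  have d: "real n * C + 1 > 0" using C0 by (simp add: add_nonneg_pos)
  show ?thesis
  proof (intro exI[of _ "2 / (real n * C + 1)"] conjI allI impI)
    show "0 < 2 / (real n * C + 1)" using d by simp
    fix x :: "nat \<Rightarrow> complex"
    assume sx: "(\<Sum>i<n. x i) = 0"
    have Q0: "0 \<le> edge_energy m ends w x"
      by (rule edge_energy_nonneg) (use pos in \<open>auto intro: less_imp_le\<close>)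
    have pair: "(cmod (x i - x j))\<^sup>2 \<le> C * edge_energy m ends w x" if "i < n" "j < n" for i j
    proof -
      have "(cmod (x i - x j))\<^sup>2 \<le> Cf (i,j) * edge_energy m ends w x" using Cf[of "(i,j)"] that by auto
      also have "\<dots> \<le> C * edge_energy m ends w x" using Cle[of "(i,j)"] that Q0 by (auto intro: mult_right_mono)
      finally show ?thesis .
    qed
    have "2 * real n * (\<Sum>i<n. (cmod (x i))\<^sup>2) = (\<Sum>i<n. \<Sum>j<n. (cmod (x i - x j))\<^sup>2)"
      using sum_pairs_cmod_diff_squared[OF sx] by simp
    also have "\<dots> \<le> (\<Sum>i<n. \<Sum>j<n. C * edge_energy m ends w x)"
      by (intro sum_mono pair) auto
    also have "\<dots> = real n * (real n * C * edge_energy m ends w x)" by simp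
    finally have "2 * (\<Sum>i<n. (cmod (x i))\<^sup>2) \<le> real n * C * edge_energy m ends w x"
      using n by (simp add: mult.assoc)
    also have "\<dots> \<le> (real n * C + 1) * edge_energy m ends w x" using Q0 by (simp add: algebra_simps)
    finally show "2 / (real n * C + 1) * (\<Sum>i<n. (cmod (x i))\<^sup>2) \<le> edge_energy m ends w x"
      using d by (simp add: pos_divide_le_eq mult.commute)
  qed
qed

lemma laplacian_eigenvalue_le:
  assumes v: "valid_graph n m ends" and w: "\<And>e. e < m \<Longrightarrow> 0 \<le> w e"
    and ev: "eigenvalue (laplacian n m ends w) \<mu>"
  shows "\<mu> \<le> 2 * (\<Sum>e<m. w e)"
proof -
  obtain u where u: "u \<in> carrier_vec n" "u \<noteq> 0\<^sub>v n" "laplacian n m ends w *\<^sub>v u = \<mu> \<cdot>\<^sub>v u"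
    using ev unfolding eigenvalue_def eigenvector_def by auto
  define S where "S = (\<Sum>i<n. (u $ i)\<^sup>2)"
  have Lu: "(\<Sum>j<n. laplacian n m ends w $$ (i,j) * u $ j) = \<mu> * u $ i" if i: "i < n" for i
  proof -
    have "(laplacian n m ends w *\<^sub>v u) $ i = \<mu> * u $ i" using u(3) u(1) i by simp
    then show ?thesis using u(1) i by (simp add: scalar_prod_def atLeast0LessThan)
  qed
  have "\<mu> * S = (\<Sum>i<n. u $ i * (\<mu> * u $ i))"
    by (simp add: S_def sum_distrib_left power2_eq_square mult_ac)
  also have "\<dots> = (\<Sum>i<n. u $ i * (\<Sum>j<n. laplacian n m ends w $$ (i,j) * u $ j))"
    by (intro sum.cong refl) (simp add: Lu)
  also have "\<dots> = (\<Sum>i<n. \<Sum>j<n. u $ i * laplacian n m ends w $$ (i,j) * u $ j)"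
    by (simp add: sum_distrib_left mult_ac)
  also have "\<dots> = (\<Sum>e<m. w e * (u $ fst (ends e) - u $ snd (ends e)) * (u $ fst (ends e) - u $ snd (ends e)))"
    using laplacian_bilinear_form[OF v, where f = "\<lambda>i. u $ i" and g = "\<lambda>i. u $ i" and w = w] by simp
  also have "\<dots> = edge_energy m ends w (\<lambda>i. complex_of_real (u $ i))"
    unfolding edge_energy_def by (intro sum.cong refl) (simp add: power2_eq_square flip: of_real_diff)
  also have "\<dots> \<le> 2 * (\<Sum>e<m. w e) * S"
    using edge_energy_le[OF v w, where x = "\<lambda>i. complex_of_real (u $ i)"] by (simp add: S_def)
  finally have le: "\<mu> * S \<le> 2 * (\<Sum>e<m. w e) * S" .
  have "S \<noteq> 0"
  proof
    assume "S = 0"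
    then have "\<forall>i\<in>{..<n}. (u $ i)\<^sup>2 = 0" unfolding S_def by (subst (asm) sum_nonneg_eq_0_iff) auto
    then have "u = 0\<^sub>v n" using u(1) by (intro eq_vecI) auto
    with u(2) show False by simp
  qed
  moreover have "S \<ge> 0" unfolding S_def by (intro sum_nonneg) auto
  ultimately show ?thesis using le by simp
qed

section \<open>A resolvent estimate for the delayed Laplacian\<close>

lemma cmod_sum_cnj_mult_squared_le:
  fixes x y :: "nat \<Rightarrow> complex"
  shows "(cmod (\<Sum>i<n. cnj (x i) * y i))\<^sup>2 \<le> (\<Sum>i<n. (cmod (x i))\<^sup>2) * (\<Sum>i<n. (cmod (y i))\<^sup>2)"
proof -
  have "cmod (\<Sum>i<n. cnj (x i) * y i) \<le> (\<Sum>i<n. cmod (x i) * cmod (y i))"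
    using norm_sum[of "\<lambda>i. cnj (x i) * y i" "{..<n}"] by (simp add: norm_mult)
  then have "(cmod (\<Sum>i<n. cnj (x i) * y i))\<^sup>2 \<le> (\<Sum>i<n. cmod (x i) * cmod (y i))\<^sup>2"
    by (simp add: power_mono)
  also have "\<dots> \<le> (\<Sum>i<n. (cmod (x i))\<^sup>2) * (\<Sum>i<n. (cmod (y i))\<^sup>2)"
    by (rule Cauchy_Schwarz_ineq_sum)
  finally show ?thesis .
qed

text \<open>Here \<open>s = |x|\<^sup>2\<close> and \<open>q = x\<^sup>H L x\<close>. The delay rotates \<open>q\<close> by \<open>\<tau> \<omega>\<close>, and since
  \<open>\<omega> sin (\<tau> \<omega>) \<le> \<tau> \<omega>\<^sup>2\<close> a small \<open>\<tau> c\<close> keeps the cross term below \<open>\<omega>\<^sup>2 s\<^sup>2 / 2\<close>.\<close>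

lemma delayed_pairing_lower_bound:
  fixes s q c \<kappa> \<tau> \<omega> :: real
  assumes s0: "0 \<le> s" and k0: "0 \<le> \<kappa>" and kq: "\<kappa> * s \<le> q" and qc: "q \<le> c * s"
    and t0: "0 \<le> \<tau>" and tc: "\<tau> * c \<le> 1/4"
  shows "(\<kappa>\<^sup>2 + \<omega>\<^sup>2 / 2) * s\<^sup>2 \<le>
    (cmod (\<i> * complex_of_real \<omega> * s + exp (- complex_of_real \<tau> * (\<i> * complex_of_real \<omega>)) * q))\<^sup>2"
proof -
  have q0: "0 \<le> q" using kq s0 k0 by (meson mult_nonneg_nonneg order.trans)
  have "(cmod (\<i> * complex_of_real \<omega> * s + exp (- complex_of_real \<tau> * (\<i> * complex_of_real \<omega>)) * q))\<^sup>2
      = (cos (\<tau> * \<omega>) * q)\<^sup>2 + (\<omega> * s - sin (\<tau> * \<omega>) * q)\<^sup>2"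
    by (simp add: cmod_power2 Re_exp Im_exp)
  also have "\<dots> = q\<^sup>2 * ((sin (\<tau> * \<omega>))\<^sup>2 + (cos (\<tau> * \<omega>))\<^sup>2) + \<omega>\<^sup>2 * s\<^sup>2 - 2 * s * q * (\<omega> * sin (\<tau> * \<omega>))"
    by (simp add: power2_eq_square algebra_simps del: sin_cos_squared_add sin_cos_squared_add2 sin_cos_squared_add3)
  finally have P: "(cmod (\<i> * complex_of_real \<omega> * s + exp (- complex_of_real \<tau> * (\<i> * complex_of_real \<omega>)) * q))\<^sup>2
      = q\<^sup>2 + \<omega>\<^sup>2 * s\<^sup>2 - 2 * s * q * (\<omega> * sin (\<tau> * \<omega>))"
    by simp
  have "\<omega> * sin (\<tau> * \<omega>) \<le> \<bar>\<omega>\<bar> * \<bar>sin (\<tau> * \<omega>)\<bar>" by (simp add: abs_mult[symmetric])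
  also have "\<dots> \<le> \<bar>\<omega>\<bar> * \<bar>\<tau> * \<omega>\<bar>" by (intro mult_left_mono abs_sin_x_le_abs_x) auto
  also have "\<dots> = \<tau> * \<omega>\<^sup>2" using t0 by (simp add: abs_mult power2_eq_square)
  finally have "s * q * (\<omega> * sin (\<tau> * \<omega>)) \<le> s * q * (\<tau> * \<omega>\<^sup>2)"
    by (intro mult_left_mono) (use s0 q0 in auto)
  also have "\<dots> \<le> s * (c * s) * (\<tau> * \<omega>\<^sup>2)"
    by (intro mult_right_mono mult_left_mono qc) (use s0 t0 in auto)
  also have "\<dots> = (\<tau> * c) * (\<omega>\<^sup>2 * s\<^sup>2)" by (simp add: power2_eq_square algebra_simps)
  also have "\<dots> \<le> (1/4) * (\<omega>\<^sup>2 * s\<^sup>2)" by (intro mult_right_mono tc) auto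
  finally have cross: "2 * s * q * (\<omega> * sin (\<tau> * \<omega>)) \<le> \<omega>\<^sup>2 * s\<^sup>2 / 2" by linarith
  have "\<kappa>\<^sup>2 * s\<^sup>2 \<le> q\<^sup>2"
    using power_mono[OF kq, of 2] k0 s0 by (simp add: power_mult_distrib)
  then show ?thesis unfolding P using cross by (simp add: algebra_simps)
qed

text \<open>Pairing \<open>j\<omega> x + exp (-j\<omega>\<tau>) L x = y\<close> with \<open>x\<close> gives \<open>x\<^sup>H y = j\<omega> |x|\<^sup>2 + exp (-j\<omega>\<tau>) x\<^sup>H L x\<close>;
  summing the equation shows \<open>\<Sum> x = 0\<close>, so coercivity applies, and Cauchy-Schwarz finishes.\<close>

lemma resolvent_estimate:
  fixes x y :: "nat \<Rightarrow> complex" and \<omega> \<tau> \<kappa> :: real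
  assumes v: "valid_graph n m ends" and w: "\<And>e. e < m \<Longrightarrow> 0 \<le> w e"
    and coercive: "\<And>x. (\<Sum>i<n. x i) = 0 \<Longrightarrow> \<kappa> * (\<Sum>i<n. (cmod (x i))\<^sup>2) \<le> edge_energy m ends w x"
    and k0: "0 \<le> \<kappa>"
    and eq: "\<And>i. i < n \<Longrightarrow> \<i> * complex_of_real \<omega> * x i +
        exp (- complex_of_real \<tau> * (\<i> * complex_of_real \<omega>)) *
          (\<Sum>j<n. complex_of_real (laplacian n m ends w $$ (i,j)) * x j) = y i"
    and sy: "(\<Sum>i<n. y i) = 0" and om: "\<omega> \<noteq> 0" and t0: "0 \<le> \<tau>"
    and tW: "\<tau> * (2 * (\<Sum>e<m. w e)) \<le> 1/4"
  shows "(\<kappa>\<^sup>2 + \<omega>\<^sup>2 / 2) * (\<Sum>i<n. (cmod (x i))\<^sup>2) \<le> (\<Sum>i<n. (cmod (y i))\<^sup>2)"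
proof -
  define jw where "jw = \<i> * complex_of_real \<omega>"
  define ex where "ex = exp (- complex_of_real \<tau> * (\<i> * complex_of_real \<omega>))"
  define Lx where "Lx = (\<lambda>i. \<Sum>j<n. complex_of_real (laplacian n m ends w $$ (i,j)) * x j)"
  have y: "y i = jw * x i + ex * Lx i" if "i < n" for i
    using eq[OF that] unfolding jw_def ex_def Lx_def by simp
  have "(\<Sum>i<n. Lx i) = (\<Sum>j<n. (\<Sum>i<n. complex_of_real (laplacian n m ends w $$ (i,j))) * x j)"
    unfolding Lx_def by (subst sum.swap) (simp add: sum_distrib_right)
  also have "\<dots> = 0" by (rule sum.neutral) (simp add: laplacian_column_sum[OF v])
  finally have "jw * (\<Sum>i<n. x i) = (\<Sum>i<n. y i)"
    by (simp add: y sum.distrib sum_distrib_left[symmetric])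
  then have sx: "(\<Sum>i<n. x i) = 0" using sy om by (simp add: jw_def)
  define s where "s = (\<Sum>i<n. (cmod (x i))\<^sup>2)"
  define q where "q = edge_energy m ends w x"
  have s0: "0 \<le> s" unfolding s_def by (intro sum_nonneg) auto
  have "(\<Sum>i<n. cnj (x i) * y i) = jw * (\<Sum>i<n. cnj (x i) * x i) + ex * (\<Sum>i<n. cnj (x i) * Lx i)"
    by (simp add: y algebra_simps sum.distrib sum_distrib_left)
  also have "\<dots> = jw * s + ex * q"
    unfolding Lx_def q_def s_def laplacian_quadratic_form[OF v, symmetric]
    by (simp add: cnj_mult_self sum_distrib_left mult.assoc)
  finally have pairing: "(\<Sum>i<n. cnj (x i) * y i) = jw * s + ex * q" .
  have "(\<kappa>\<^sup>2 + \<omega>\<^sup>2 / 2) * s\<^sup>2 \<le> (cmod (jw * s + ex * q))\<^sup>2"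
    unfolding jw_def ex_def
  proof (rule delayed_pairing_lower_bound[OF s0 k0 _ _ t0 tW])
    show "\<kappa> * s \<le> q" unfolding s_def q_def by (rule coercive[OF sx])
    show "q \<le> 2 * (\<Sum>e<m. w e) * s" unfolding q_def s_def by (rule edge_energy_le[OF v w])
  qed
  also have "\<dots> \<le> s * (\<Sum>i<n. (cmod (y i))\<^sup>2)"
    using cmod_sum_cnj_mult_squared_le[of x y n] unfolding pairing s_def .
  finally have "s * ((\<kappa>\<^sup>2 + \<omega>\<^sup>2 / 2) * s) \<le> s * (\<Sum>i<n. (cmod (y i))\<^sup>2)"
    by (simp add: power2_eq_square mult_ac)
  moreover have "s = 0 \<or> 0 < s" using s0 by auto
  ultimately show ?thesis
    by (auto simp: s_def sum_nonneg mult_le_cancel_left_pos)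
qed

section \<open>Inverses of matrices\<close>

lemma mat_inverse_eq_Some:
  fixes A :: "'a::field mat"
  assumes A: "A \<in> carrier_mat n n" and d: "det A \<noteq> 0"
  obtains B where "mat_inverse A = Some B" "A * B = 1\<^sub>m n" "B * A = 1\<^sub>m n" "B \<in> carrier_mat n n"
proof -
  have "A \<in> Units (ring_mat TYPE('a) n ())" by (rule det_non_zero_imp_unit[OF A d])
  then obtain B where "mat_inverse A = Some B" using mat_inverse(1)[OF A, of "()"] by fastforce
  with mat_inverse(2)[OF A this] that show ?thesis by blast
qed

lemma mult_mat_vec_index_sum:
  assumes "A \<in> carrier_mat n n" and "v \<in> carrier_vec n" and "i < n"
  shows "(A *\<^sub>v v) $ i = (\<Sum>j<n. A $$ (i,j) * v $ j)"
  using assms by (simp add: scalar_prod_def atLeast0LessThan)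

lemma mult_mat_index_sum:
  assumes "A \<in> carrier_mat n n" and "Z \<in> carrier_mat n K" and "i < n" and "k < K"
  shows "(A * Z) $$ (i,k) = (\<Sum>j<n. A $$ (i,j) * Z $$ (j,k))"
  using assms by (simp add: scalar_prod_def atLeast0LessThan)

lemma commute_inverse_mat:
  fixes M X R :: "'a::comm_ring_1 mat"
  assumes M: "M \<in> carrier_mat n n" and X: "X \<in> carrier_mat n n" and R: "R \<in> carrier_mat n n"
    and XR: "X * R = 1\<^sub>m n" and RX: "R * X = 1\<^sub>m n" and MX: "M * X = X * M"
  shows "M * R = R * M"
proof -
  have "M * R = (R * X) * (M * R)" using RX M R by simp
  also have "\<dots> = R * ((X * M) * R)" using M X R by (simp add: assoc_mult_mat[of _ n n _ n _ n])
  also have "\<dots> = R * ((M * X) * R)" using MX by simp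
  also have "\<dots> = (R * M) * (X * R)" using M X R by (simp add: assoc_mult_mat[of _ n n _ n _ n])
  also have "\<dots> = R * M" using XR M R by simp
  finally show ?thesis .
qed

lemma mat_inverse_smult:
  fixes A :: "'a::field mat"
  assumes A: "A \<in> carrier_mat n n" and d: "det A \<noteq> 0" and c: "c \<noteq> 0"
  shows "the (mat_inverse (c \<cdot>\<^sub>m A)) = inverse c \<cdot>\<^sub>m the (mat_inverse A)"
proof -
  obtain R where R: "mat_inverse A = Some R" "A * R = 1\<^sub>m n" "R \<in> carrier_mat n n"
    using mat_inverse_eq_Some[OF A d] by metis
  have cA: "c \<cdot>\<^sub>m A \<in> carrier_mat n n" using A by simp
  obtain R' where R': "mat_inverse (c \<cdot>\<^sub>m A) = Some R'" "R' * (c \<cdot>\<^sub>m A) = 1\<^sub>m n" "R' \<in> carrier_mat n n"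
    using mat_inverse_eq_Some[OF cA] d c A by (metis det_smult mult_eq_0_iff power_not_zero carrier_matD(1))
  have "(c \<cdot>\<^sub>m A) * (inverse c \<cdot>\<^sub>m R) = (c * inverse c) \<cdot>\<^sub>m (A * R)"
    using A R(3) by (intro eq_matI) (auto simp: scalar_prod_def sum_distrib_left mult_ac)
  also have "\<dots> = 1\<^sub>m n" using c R(2) by (auto intro: eq_matI)
  finally have right_inv: "(c \<cdot>\<^sub>m A) * (inverse c \<cdot>\<^sub>m R) = 1\<^sub>m n" .
  have "R' = R' * ((c \<cdot>\<^sub>m A) * (inverse c \<cdot>\<^sub>m R))" using right_inv R'(3) by simp
  also have "\<dots> = (R' * (c \<cdot>\<^sub>m A)) * (inverse c \<cdot>\<^sub>m R)"
    using R'(3) cA R(3) by (simp add: assoc_mult_mat[of _ n n _ n _ n])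
  also have "\<dots> = inverse c \<cdot>\<^sub>m R" using R'(2) R(3) by simp
  finally show ?thesis using R(1) R'(1) by simp
qed

lemma mat_inverse_index_cofactor:
  fixes A :: "'a::field mat"
  assumes A: "A \<in> carrier_mat n n" and d: "det A \<noteq> 0" and i: "i < n" and j: "j < n"
  shows "the (mat_inverse A) $$ (i,j) = cofactor A j i / det A"
proof -
  obtain R where R: "mat_inverse A = Some R" "R * A = 1\<^sub>m n" "R \<in> carrier_mat n n"
    using mat_inverse_eq_Some[OF A d] by metis
  have adj: "adj_mat A \<in> carrier_mat n n" "A * adj_mat A = det A \<cdot>\<^sub>m 1\<^sub>m n" using adj_mat[OF A] by auto
  have "adj_mat A = (R * A) * adj_mat A" using R(2) adj(1) by simp
  also have "\<dots> = R * (A * adj_mat A)" using R(3) A adj(1) by (rule assoc_mult_mat)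
  also have "\<dots> = det A \<cdot>\<^sub>m R" unfolding adj(2) using R(3)
    by (simp add: mult_smult_distrib[of R n n "1\<^sub>m n" n])
  finally have "adj_mat A $$ (i,j) = det A * R $$ (i,j)" using i j R(3) by simp
  moreover have "adj_mat A $$ (i,j) = cofactor A j i" using A i j by (simp add: adj_mat_def carrier_matD)
  ultimately have "cofactor A j i = det A * R $$ (i,j)" by simp
  then show ?thesis using R(1) d by (simp add: field_simps)
qed

lemma tendsto_det_mat:
  fixes A :: "'b \<Rightarrow> 'a::real_normed_field mat"
  assumes A: "\<And>t. A t \<in> carrier_mat n n" and B: "B \<in> carrier_mat n n"
    and lim: "\<And>i j. i < n \<Longrightarrow> j < n \<Longrightarrow> ((\<lambda>t. A t $$ (i,j)) \<longlongrightarrow> B $$ (i,j)) F"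
  shows "((\<lambda>t. det (A t)) \<longlongrightarrow> det B) F"
  unfolding det_def'[OF A] det_def'[OF B]
proof (intro tendsto_sum tendsto_mult tendsto_const tendsto_prod)
  fix p i assume p: "p \<in> {p. p permutes {0..<n}}" and i: "i \<in> {0..<n}"
  have "p i \<in> {0..<n}" using p i by (simp add: permutes_in_image)
  then show "((\<lambda>t. A t $$ (i, p i)) \<longlongrightarrow> B $$ (i, p i)) F" using i by (intro lim) auto
qed

lemma tendsto_cofactor:
  fixes A :: "'b \<Rightarrow> 'a::real_normed_field mat"
  assumes A: "\<And>t. A t \<in> carrier_mat n n" and B: "B \<in> carrier_mat n n"
    and lim: "\<And>i j. i < n \<Longrightarrow> j < n \<Longrightarrow> ((\<lambda>t. A t $$ (i,j)) \<longlongrightarrow> B $$ (i,j)) F"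
    and a: "a < n" and b: "b < n"
  shows "((\<lambda>t. cofactor (A t) a b) \<longlongrightarrow> cofactor B a b) F"
  unfolding cofactor_def
proof (intro tendsto_mult tendsto_const tendsto_det_mat)
  show "\<And>t. mat_delete (A t) a b \<in> carrier_mat (n - 1) (n - 1)" using A by (rule mat_delete_carrier)
  show "mat_delete B a b \<in> carrier_mat (n - 1) (n - 1)" using B by (rule mat_delete_carrier)
  fix i j assume i: "i < n - 1" and j: "j < n - 1"
  have "dim_row (A t) = n" "dim_col (A t) = n" for t using A by (auto simp: carrier_matD)
  moreover have "dim_row B = n" "dim_col B = n" using B by (auto simp: carrier_matD)
  ultimately show "((\<lambda>t. mat_delete (A t) a b $$ (i, j)) \<longlongrightarrow> mat_delete B a b $$ (i, j)) F"
    unfolding mat_delete_def using i j by (simp add: lim)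
qed

lemma tendsto_mat_inverse_index:
  fixes A :: "'b \<Rightarrow> 'a::real_normed_field mat"
  assumes A: "\<And>t. A t \<in> carrier_mat n n" and B: "B \<in> carrier_mat n n"
    and lim: "\<And>i j. i < n \<Longrightarrow> j < n \<Longrightarrow> ((\<lambda>t. A t $$ (i,j)) \<longlongrightarrow> B $$ (i,j)) F"
    and d: "det B \<noteq> 0" and i: "i < n" and j: "j < n"
  shows "((\<lambda>t. the (mat_inverse (A t)) $$ (i,j)) \<longlongrightarrow> the (mat_inverse B) $$ (i,j)) F"
proof -
  have dlim: "((\<lambda>t. det (A t)) \<longlongrightarrow> det B) F" by (rule tendsto_det_mat[OF A B lim])
  have "((\<lambda>t. cofactor (A t) j i / det (A t)) \<longlongrightarrow> cofactor B j i / det B) F"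
    by (intro tendsto_divide tendsto_cofactor[OF A B lim] dlim d j i)
  moreover have "eventually (\<lambda>t. cofactor (A t) j i / det (A t) = the (mat_inverse (A t)) $$ (i,j)) F"
    using tendsto_imp_eventually_ne[OF dlim d]
    by eventually_elim (simp add: mat_inverse_index_cofactor[OF A _ i j])
  ultimately show ?thesis
    unfolding mat_inverse_index_cofactor[OF B d i j] by (rule Lim_transform_eventually)
qed

section \<open>The transfer function\<close>

definition num_channels :: "uncertainty \<Rightarrow> nat \<Rightarrow> nat \<Rightarrow> nat" where
  "num_channels s n m = (if link_associated s then m else n)"

lemma num_channels_agent_associated: "agent_associated s \<Longrightarrow> num_channels s n m = n"
  by (auto simp: num_channels_def agent_associated_def link_associated_def)

lemma cmat_dims [simp]: "dim_row (cmat A) = dim_row A" "dim_col (cmat A) = dim_col A"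
  by (auto simp: cmat_def)

lemma cmat_index [simp]:
  "i < dim_row A \<Longrightarrow> j < dim_col A \<Longrightarrow> cmat A $$ (i,j) = complex_of_real (A $$ (i,j))"
  by (simp add: cmat_def)

lemma cmat_mult: "A \<in> carrier_mat nr n \<Longrightarrow> B \<in> carrier_mat n nc \<Longrightarrow> cmat (A * B) = cmat A * cmat B"
  unfolding cmat_def by (rule of_real_hom.mat_hom_mult)

lemma cmat_smult: "cmat (c \<cdot>\<^sub>m A) = complex_of_real c \<cdot>\<^sub>m cmat A"
  by (rule eq_matI) (auto simp: cmat_def)

lemma cmat_mat_diag: "cmat (mat_diag K \<sigma>) = mat_diag K (\<lambda>k. complex_of_real (\<sigma> k))"
  by (rule eq_matI) (auto simp: cmat_def mat_diag_def)

lemma degree_mat_dims [simp]: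
  "degree_mat n m ends w \<in> carrier_mat n n"
  "dim_row (degree_mat n m ends w) = n" "dim_col (degree_mat n m ends w) = n"
  by (simp_all add: degree_mat_def mat_diag_def)

lemma noise_input_carrier: "noise_input s n m ends w \<in> carrier_mat n (num_channels s n m)"
  by (cases s) (auto simp: noise_input_def num_channels_def link_associated_def adjacency_mat_def
      weight_mat_def intro!: mult_carrier_mat)

lemma centering_dims [simp]:
  "centering n \<in> carrier_mat n n" "dim_row (centering n) = n" "dim_col (centering n) = n"
  unfolding centering_def by auto

lemma centering_index: "i < n \<Longrightarrow> j < n \<Longrightarrow> centering n $$ (i,j) = (if i = j then 1 else 0) - 1 / real n"
  unfolding centering_def by (subst index_minus_mat) auto

lemma centering_column_sum: "0 < n \<Longrightarrow> j < n \<Longrightarrow> (\<Sum>i<n. centering n $$ (i,j)) = 0"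
  by (simp add: centering_index sum_subtractf)

lemma centering_mult_laplacian:
  assumes v: "valid_graph n m ends"
  shows "centering n * laplacian n m ends w = laplacian n m ends w"
proof (rule eq_matI)
  fix i j assume "i < dim_row (laplacian n m ends w)" "j < dim_col (laplacian n m ends w)"
  then have i: "i < n" and j: "j < n" by auto
  have "(centering n * laplacian n m ends w) $$ (i,j) =
    (\<Sum>k<n. ((if i = k then 1 else 0) - 1 / real n) * laplacian n m ends w $$ (k,j))"
    using i j by (simp add: scalar_prod_def centering_index atLeast0LessThan mult_delta_left mult_delta_right)
  also have "\<dots> = laplacian n m ends w $$ (i,j) - (1 / real n) * (\<Sum>k<n. laplacian n m ends w $$ (k,j))"
    using i by (simp add: left_diff_distrib sum_subtractf sum_distrib_left mult_delta_left)
  also have "\<dots> = laplacian n m ends w $$ (i,j)"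
    using laplacian_column_sum[OF v j, of w, where 'a=real] by simp
  finally show "(centering n * laplacian n m ends w) $$ (i,j) = laplacian n m ends w $$ (i,j)" .
qed auto

lemma laplacian_mult_centering:
  assumes v: "valid_graph n m ends"
  shows "laplacian n m ends w * centering n = laplacian n m ends w"
proof (rule eq_matI)
  fix i j assume "i < dim_row (laplacian n m ends w)" "j < dim_col (laplacian n m ends w)"
  then have i: "i < n" and j: "j < n" by auto
  have "(laplacian n m ends w * centering n) $$ (i,j) =
    (\<Sum>k<n. laplacian n m ends w $$ (i,k) * ((if k = j then 1 else 0) - 1 / real n))"
    using i j by (simp add: scalar_prod_def centering_index atLeast0LessThan mult_delta_left mult_delta_right)
  also have "\<dots> = laplacian n m ends w $$ (i,j) - (1 / real n) * (\<Sum>k<n. laplacian n m ends w $$ (i,k))"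
    using j by (simp add: right_diff_distrib sum_subtractf sum_distrib_left mult_delta_left mult.commute)
  also have "\<dots> = laplacian n m ends w $$ (i,j)"
  proof -
    have "(\<Sum>k<n. laplacian n m ends w $$ (i,k)) = (\<Sum>k<n. laplacian n m ends w $$ (k,i))"
      by (rule sum.cong) (auto intro: laplacian_sym[OF i])
    also have "\<dots> = 0" using laplacian_column_sum[OF v i, of w, where 'a=real] by simp
    finally show ?thesis by simp
  qed
  finally show "(laplacian n m ends w * centering n) $$ (i,j) = laplacian n m ends w $$ (i,j)" .
qed auto

definition char_mat ::
  "nat \<Rightarrow> nat \<Rightarrow> (nat \<Rightarrow> nat \<times> nat) \<Rightarrow> (nat \<Rightarrow> real) \<Rightarrow> real \<Rightarrow> real \<Rightarrow> complex mat" where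
  "char_mat n m ends w \<tau> \<omega> = (\<i> * complex_of_real \<omega>) \<cdot>\<^sub>m 1\<^sub>m n +
     exp (- complex_of_real \<tau> * (\<i> * complex_of_real \<omega>)) \<cdot>\<^sub>m cmat (laplacian n m ends w)"

definition char_mat_inv ::
  "nat \<Rightarrow> nat \<Rightarrow> (nat \<Rightarrow> nat \<times> nat) \<Rightarrow> (nat \<Rightarrow> real) \<Rightarrow> real \<Rightarrow> real \<Rightarrow> complex mat" where
  "char_mat_inv n m ends w \<tau> \<omega> = the (mat_inverse (char_mat n m ends w \<tau> \<omega>))"

definition centred_input :: "uncertainty \<Rightarrow> nat \<Rightarrow> nat \<Rightarrow> (nat \<Rightarrow> nat \<times> nat) \<Rightarrow> (nat \<Rightarrow> real) \<Rightarrow> complex mat" where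
  "centred_input s n m ends w = cmat (centering n) * cmat (noise_input s n m ends w)"

text \<open>The squared norm of column \<open>k\<close> of the transfer function without the factor \<open>\<sigma>\<^sub>k\<close>.
  At \<open>\<omega> = 0\<close>, a null set, \<open>char_mat\<close> is singular and the value is set to \<open>0\<close>.\<close>

definition channel_gain ::
  "uncertainty \<Rightarrow> nat \<Rightarrow> nat \<Rightarrow> (nat \<Rightarrow> nat \<times> nat) \<Rightarrow> (nat \<Rightarrow> real) \<Rightarrow> real \<Rightarrow> nat \<Rightarrow> real \<Rightarrow> real" where
  "channel_gain s n m ends w \<tau> k \<omega> = (if \<omega> = 0 then 0 else
     (\<Sum>i<n. (cmod ((char_mat_inv n m ends w \<tau> \<omega> * centred_input s n m ends w) $$ (i,k)))\<^sup>2))"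

definition admissible :: "nat \<Rightarrow> nat \<Rightarrow> (nat \<Rightarrow> nat \<times> nat) \<Rightarrow> (nat \<Rightarrow> real) \<Rightarrow> real \<Rightarrow> real \<Rightarrow> bool" where
  "admissible n m ends w \<kappa> \<tau> \<longleftrightarrow> valid_graph n m ends \<and> 0 < n \<and> (\<forall>e<m. 0 \<le> w e) \<and> 0 < \<kappa> \<and>
     (\<forall>x. (\<Sum>i<n. x i) = 0 \<longrightarrow> \<kappa> * (\<Sum>i<n. (cmod (x i))\<^sup>2) \<le> edge_energy m ends w x) \<and>
     0 \<le> \<tau> \<and> \<tau> * (2 * (\<Sum>e<m. w e)) \<le> 1/4"

lemma char_mat_dims [simp]:
  "char_mat n m ends w \<tau> \<omega> \<in> carrier_mat n n"
  "dim_row (char_mat n m ends w \<tau> \<omega>) = n" "dim_col (char_mat n m ends w \<tau> \<omega>) = n"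
proof -
  show "char_mat n m ends w \<tau> \<omega> \<in> carrier_mat n n"
    unfolding char_mat_def by (intro add_carrier_mat smult_carrier_mat one_carrier_mat carrier_matI) simp_all
  then show "dim_row (char_mat n m ends w \<tau> \<omega>) = n" "dim_col (char_mat n m ends w \<tau> \<omega>) = n" by auto
qed

lemma centred_input_carrier: "centred_input s n m ends w \<in> carrier_mat n (num_channels s n m)"
  unfolding centred_input_def using noise_input_carrier[of s n m ends w]
  by (intro mult_carrier_mat carrier_matI) (simp_all add: carrier_matD)

lemma centred_input_dims [simp]:
  "dim_row (centred_input s n m ends w) = n" "dim_col (centred_input s n m ends w) = num_channels s n m"
  using centred_input_carrier[of s n m ends w] by auto

lemma char_mat_index:
  "i < n \<Longrightarrow> j < n \<Longrightarrow> char_mat n m ends w \<tau> \<omega> $$ (i,j) =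
     (if i = j then \<i> * complex_of_real \<omega> else 0) +
     exp (- complex_of_real \<tau> * (\<i> * complex_of_real \<omega>)) * complex_of_real (laplacian n m ends w $$ (i,j))"
  by (simp add: char_mat_def)

lemma char_mat_row_sum:
  assumes i: "i < n"
  shows "(\<Sum>j<n. char_mat n m ends w \<tau> \<omega> $$ (i,j) * z j) = \<i> * complex_of_real \<omega> * z i +
     exp (- complex_of_real \<tau> * (\<i> * complex_of_real \<omega>)) *
       (\<Sum>j<n. complex_of_real (laplacian n m ends w $$ (i,j)) * z j)"
proof -
  have "(\<Sum>j<n. char_mat n m ends w \<tau> \<omega> $$ (i,j) * z j) =
      (\<Sum>j<n. (if i = j then \<i> * complex_of_real \<omega> * z j else 0) +
        exp (- complex_of_real \<tau> * (\<i> * complex_of_real \<omega>)) *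
          (complex_of_real (laplacian n m ends w $$ (i,j)) * z j))"
    by (intro sum.cong refl) (simp add: char_mat_index i distrib_right mult.assoc)
  then show ?thesis using i by (simp add: sum.distrib sum_distrib_left)
qed

lemma admissibleD:
  assumes "admissible n m ends w \<kappa> \<tau>"
  shows "valid_graph n m ends" "0 < n" "\<And>e. e < m \<Longrightarrow> 0 \<le> w e" "0 < \<kappa>"
    "\<And>x. (\<Sum>i<n. x i) = 0 \<Longrightarrow> \<kappa> * (\<Sum>i<n. (cmod (x i))\<^sup>2) \<le> edge_energy m ends w x"
    "0 \<le> \<tau>" "\<tau> * (2 * (\<Sum>e<m. w e)) \<le> 1/4"
  using assms unfolding admissible_def by auto

lemma char_mat_resolvent_estimate:
  assumes adm: "admissible n m ends w \<kappa> \<tau>" and om: "\<omega> \<noteq> 0"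
    and z: "\<And>i. i < n \<Longrightarrow> (\<Sum>j<n. char_mat n m ends w \<tau> \<omega> $$ (i,j) * z j) = y i"
    and sy: "(\<Sum>i<n. y i) = 0"
  shows "(\<kappa>\<^sup>2 + \<omega>\<^sup>2 / 2) * (\<Sum>i<n. (cmod (z i))\<^sup>2) \<le> (\<Sum>i<n. (cmod (y i))\<^sup>2)"
  using z by (intro resolvent_estimate[OF admissibleD(1,3,5)[OF adm] _ _ sy om admissibleD(6,7)[OF adm]])
    (auto simp: char_mat_row_sum less_imp_le[OF admissibleD(4)[OF adm]])

lemma det_char_mat_nonzero:
  assumes adm: "admissible n m ends w \<kappa> \<tau>" and om: "\<omega> \<noteq> 0"
  shows "det (char_mat n m ends w \<tau> \<omega>) \<noteq> 0"
proof
  assume "det (char_mat n m ends w \<tau> \<omega>) = 0"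
  then obtain v where v: "v \<in> carrier_vec n" "v \<noteq> 0\<^sub>v n" "char_mat n m ends w \<tau> \<omega> *\<^sub>v v = 0\<^sub>v n"
    using det_0_iff_vec_prod_zero[OF char_mat_dims(1)] by blast
  have "(\<kappa>\<^sup>2 + \<omega>\<^sup>2 / 2) * (\<Sum>i<n. (cmod (v $ i))\<^sup>2) \<le> (\<Sum>i<n. (cmod ((\<lambda>_. 0::complex) i))\<^sup>2)"
  proof (rule char_mat_resolvent_estimate[OF adm om])
    fix i assume i: "i < n"
    have "(\<Sum>j<n. char_mat n m ends w \<tau> \<omega> $$ (i,j) * v $ j) = (char_mat n m ends w \<tau> \<omega> *\<^sub>v v) $ i"
      by (rule mult_mat_vec_index_sum[symmetric, OF char_mat_dims(1) v(1) i])
    also have "\<dots> = 0" unfolding v(3) using i by (rule index_zero_vec(1))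
    finally show "(\<Sum>j<n. char_mat n m ends w \<tau> \<omega> $$ (i,j) * v $ j) = 0" .
  qed simp
  moreover have "\<kappa>\<^sup>2 + \<omega>\<^sup>2 / 2 > 0" using admissibleD(4)[OF adm] by (simp add: add_pos_nonneg)
  ultimately have "(\<Sum>i<n. (cmod (v $ i))\<^sup>2) \<le> 0"
    by (simp add: mult_le_0_iff)
  then have "(\<Sum>i<n. (cmod (v $ i))\<^sup>2) = 0"
    by (meson order.antisym sum_nonneg zero_le_power2)
  then have "\<forall>i\<in>{..<n}. (cmod (v $ i))\<^sup>2 = 0"
    by (subst (asm) sum_nonneg_eq_0_iff) auto
  then have "v = 0\<^sub>v n" using v(1) by (intro eq_vecI) auto
  with v(2) show False by simp
qed

lemma char_mat_inv:
  assumes "admissible n m ends w \<kappa> \<tau>" and "\<omega> \<noteq> 0"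
  shows "char_mat n m ends w \<tau> \<omega> * char_mat_inv n m ends w \<tau> \<omega> = 1\<^sub>m n"
    "char_mat_inv n m ends w \<tau> \<omega> * char_mat n m ends w \<tau> \<omega> = 1\<^sub>m n"
    "char_mat_inv n m ends w \<tau> \<omega> \<in> carrier_mat n n"
proof -
  have d: "det (char_mat n m ends w \<tau> \<omega>) \<noteq> 0" by (rule det_char_mat_nonzero[OF assms])
  obtain B where B: "mat_inverse (char_mat n m ends w \<tau> \<omega>) = Some B"
    "char_mat n m ends w \<tau> \<omega> * B = 1\<^sub>m n" "B * char_mat n m ends w \<tau> \<omega> = 1\<^sub>m n" "B \<in> carrier_mat n n"
    by (rule mat_inverse_eq_Some[OF char_mat_dims(1) d])
  have "char_mat_inv n m ends w \<tau> \<omega> = B" unfolding char_mat_inv_def B(1) by simp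
  with B(2-4) show "char_mat n m ends w \<tau> \<omega> * char_mat_inv n m ends w \<tau> \<omega> = 1\<^sub>m n"
    "char_mat_inv n m ends w \<tau> \<omega> * char_mat n m ends w \<tau> \<omega> = 1\<^sub>m n"
    "char_mat_inv n m ends w \<tau> \<omega> \<in> carrier_mat n n" by simp_all
qed

lemma centering_commutes_char_mat:
  assumes v: "valid_graph n m ends"
  shows "cmat (centering n) * char_mat n m ends w \<tau> \<omega> = char_mat n m ends w \<tau> \<omega> * cmat (centering n)"
proof -
  let ?M = "cmat (centering n)" and ?L = "cmat (laplacian n m ends w)"
  let ?a = "\<i> * complex_of_real \<omega>" and ?b = "exp (- complex_of_real \<tau> * (\<i> * complex_of_real \<omega>))"
  have M: "?M \<in> carrier_mat n n" and L: "?L \<in> carrier_mat n n" by (simp_all add: carrier_matI)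
  have centering_L: "?M * ?L = ?L"
    using cmat_mult[of "centering n" n n "laplacian n m ends w" n] centering_mult_laplacian[OF v] by simp
  have L_centering: "?L * ?M = ?L"
    using cmat_mult[of "laplacian n m ends w" n n "centering n" n] laplacian_mult_centering[OF v] by simp
  have "?M * char_mat n m ends w \<tau> \<omega> = ?M * (?a \<cdot>\<^sub>m 1\<^sub>m n) + ?M * (?b \<cdot>\<^sub>m ?L)"
    unfolding char_mat_def by (rule mult_add_distrib_mat[of _ n n _ n]) (use M L in simp_all)
  also have "\<dots> = ?a \<cdot>\<^sub>m ?M + ?b \<cdot>\<^sub>m ?L"
    using mult_smult_distrib[OF M, of "1\<^sub>m n" n ?a] mult_smult_distrib[OF M L, of ?b] centering_L M by simp
  also have "\<dots> = (?a \<cdot>\<^sub>m 1\<^sub>m n) * ?M + (?b \<cdot>\<^sub>m ?L) * ?M"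
    using mult_smult_assoc_mat[of "1\<^sub>m n" n n ?M n ?a] mult_smult_assoc_mat[OF L M, of ?b] L_centering M by simp
  also have "\<dots> = char_mat n m ends w \<tau> \<omega> * ?M"
    unfolding char_mat_def by (rule add_mult_distrib_mat[symmetric, of _ n n _ _ n]) (use M L in simp_all)
  finally show ?thesis .
qed

text \<open>Since \<open>M\<^sub>n\<close> commutes with \<open>char_mat\<close>, the transfer function is the inverse applied to
  the centred input \<open>M\<^sub>n B\<close>.\<close>

lemma transfer_eq_char_mat_inv:
  assumes adm: "admissible n m ends w \<kappa> \<tau>" and om: "\<omega> \<noteq> 0"
  shows "transfer s n m ends w \<tau> \<sigma> \<omega> =
    (char_mat_inv n m ends w \<tau> \<omega> * centred_input s n m ends w) * cmat (mat_diag (num_channels s n m) \<sigma>)"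
proof -
  note R = char_mat_inv[OF adm om]
  let ?M = "cmat (centering n)" and ?R = "char_mat_inv n m ends w \<tau> \<omega>"
    and ?B = "cmat (noise_input s n m ends w)"
  have B: "?B \<in> carrier_mat n (num_channels s n m)"
    using noise_input_carrier[of s n m ends w] by (intro carrier_matI) (simp_all add: carrier_matD)
  have dim_B: "dim_col (noise_input s n m ends w) = num_channels s n m"
    using noise_input_carrier[of s n m ends w] by (simp add: carrier_matD)
  have M: "?M \<in> carrier_mat n n" by (simp add: carrier_matI)
  have MR: "?M * ?R = ?R * ?M"
    by (rule commute_inverse_mat[OF M char_mat_dims(1) R(3) R(1,2)
          centering_commutes_char_mat[OF admissibleD(1)[OF adm]]])
  have "transfer s n m ends w \<tau> \<sigma> \<omega> = ?M * ?R * ?B * cmat (mat_diag (num_channels s n m) \<sigma>)"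
    unfolding transfer_def Let_def char_mat_inv_def char_mat_def dim_B ..
  also have "?M * ?R * ?B = ?R * (?M * ?B)"
    unfolding MR by (rule assoc_mult_mat[OF R(3) M B])
  finally show ?thesis unfolding centred_input_def .
qed

section \<open>The performance integral\<close>

lemma trace_gram_mult_diag:
  assumes C: "C \<in> carrier_mat n K"
  shows "Re (mtrace (conj_transpose (C * cmat (mat_diag K \<sigma>)) * (C * cmat (mat_diag K \<sigma>)))) =
    (\<Sum>k<K. (\<sigma> k)\<^sup>2 * (\<Sum>i<n. (cmod (C $$ (i,k)))\<^sup>2))"
proof -
  define G where "G = C * cmat (mat_diag K \<sigma>)"
  have G: "G = mat n K (\<lambda>(i,j). C $$ (i,j) * complex_of_real (\<sigma> j))"
    unfolding G_def cmat_mat_diag by (rule mat_diag_mult_right[OF C])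
  have "mtrace (conj_transpose G * G) = (\<Sum>k<K. \<Sum>i<n. cnj (G $$ (i,k)) * G $$ (i,k))"
    unfolding mtrace_def
    by (intro sum.cong) (auto simp: conj_transpose_def G scalar_prod_def atLeast0LessThan)
  also have "\<dots> = (\<Sum>k<K. \<Sum>i<n. complex_of_real ((\<sigma> k)\<^sup>2 * (cmod (C $$ (i,k)))\<^sup>2))"
  proof (intro sum.cong refl)
    fix k i assume "k \<in> {..<K}" and "i \<in> {..<n}"
    then have "(cmod (G $$ (i,k)))\<^sup>2 = (\<sigma> k)\<^sup>2 * (cmod (C $$ (i,k)))\<^sup>2"
      by (simp add: G norm_mult power_mult_distrib)
    then show "cnj (G $$ (i,k)) * G $$ (i,k) = complex_of_real ((\<sigma> k)\<^sup>2 * (cmod (C $$ (i,k)))\<^sup>2)"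
      by (simp only: cnj_mult_self)
  qed
  finally show ?thesis unfolding G_def by (simp add: Re_sum sum_distrib_left)
qed

lemma transfer_trace_eq:
  assumes adm: "admissible n m ends w \<kappa> \<tau>" and om: "\<omega> \<noteq> 0"
  shows "Re (mtrace (conj_transpose (transfer s n m ends w \<tau> \<sigma> \<omega>) * transfer s n m ends w \<tau> \<sigma> \<omega>)) =
    (\<Sum>k<num_channels s n m. (\<sigma> k)\<^sup>2 * channel_gain s n m ends w \<tau> k \<omega>)"
proof -
  have C: "char_mat_inv n m ends w \<tau> \<omega> * centred_input s n m ends w \<in> carrier_mat n (num_channels s n m)"
    using char_mat_inv(3)[OF adm om] centred_input_carrier by (rule mult_carrier_mat)
  show ?thesis
    unfolding transfer_eq_char_mat_inv[OF adm om] trace_gram_mult_diag[OF C] channel_gain_def using om by simp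
qed

lemma centred_input_column_sum:
  assumes n: "0 < n" and k: "k < num_channels s n m"
  shows "(\<Sum>i<n. centred_input s n m ends w $$ (i,k)) = 0"
proof -
  let ?B = "noise_input s n m ends w"
  have B: "?B \<in> carrier_mat n (num_channels s n m)" by (rule noise_input_carrier)
  have "(\<Sum>i<n. (centering n * ?B) $$ (i,k)) = (\<Sum>i<n. \<Sum>l<n. centering n $$ (i,l) * ?B $$ (l,k))"
    by (intro sum.cong refl) (simp add: mult_mat_index_sum[OF centering_dims(1) B _ k])
  also have "\<dots> = (\<Sum>l<n. (\<Sum>i<n. centering n $$ (i,l)) * ?B $$ (l,k))"
    by (subst sum.swap) (simp add: sum_distrib_right)
  also have "\<dots> = 0" using n by (intro sum.neutral) (simp add: centering_column_sum)
  finally have "complex_of_real (\<Sum>i<n. (centering n * ?B) $$ (i,k)) = 0" by simp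
  moreover have "centred_input s n m ends w = cmat (centering n * ?B)"
    unfolding centred_input_def by (rule cmat_mult[symmetric, OF centering_dims(1) B])
  ultimately show ?thesis
    unfolding of_real_sum using B k by (simp add: cmat_def carrier_matD)
qed

definition centred_input_norm :: "uncertainty \<Rightarrow> nat \<Rightarrow> nat \<Rightarrow> (nat \<Rightarrow> nat \<times> nat) \<Rightarrow> (nat \<Rightarrow> real) \<Rightarrow> nat \<Rightarrow> real" where
  "centred_input_norm s n m ends w k = (\<Sum>i<n. (cmod (centred_input s n m ends w $$ (i,k)))\<^sup>2)"

lemma centred_input_norm_nonneg: "0 \<le> centred_input_norm s n m ends w k"
  unfolding centred_input_norm_def by (intro sum_nonneg) auto

lemma channel_gain_nonneg: "0 \<le> channel_gain s n m ends w \<tau> k \<omega>"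
  unfolding channel_gain_def by (auto intro: sum_nonneg)

lemma channel_gain_at_zero [simp]: "channel_gain s n m ends w \<tau> k 0 = 0"
  by (simp add: channel_gain_def)

lemma channel_gain_estimate:
  assumes adm: "admissible n m ends w \<kappa> \<tau>" and om: "\<omega> \<noteq> 0" and k: "k < num_channels s n m"
  shows "(\<kappa>\<^sup>2 + \<omega>\<^sup>2 / 2) * channel_gain s n m ends w \<tau> k \<omega> \<le> centred_input_norm s n m ends w k"
proof -
  note R = char_mat_inv[OF adm om]
  let ?Y = "centred_input s n m ends w"
  let ?Z = "char_mat_inv n m ends w \<tau> \<omega> * ?Y"
  have Z: "?Z \<in> carrier_mat n (num_channels s n m)" using R(3) centred_input_carrier by (rule mult_carrier_mat)
  have "char_mat n m ends w \<tau> \<omega> * ?Z = (char_mat n m ends w \<tau> \<omega> * char_mat_inv n m ends w \<tau> \<omega>) * ?Y"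
    by (rule assoc_mult_mat[symmetric, OF char_mat_dims(1) R(3) centred_input_carrier])
  also have "\<dots> = ?Y" using R(1) centred_input_carrier by simp
  finally have XZ: "char_mat n m ends w \<tau> \<omega> * ?Z = ?Y" .
  have "(\<kappa>\<^sup>2 + \<omega>\<^sup>2 / 2) * (\<Sum>i<n. (cmod (?Z $$ (i,k)))\<^sup>2) \<le> (\<Sum>i<n. (cmod (?Y $$ (i,k)))\<^sup>2)"
  proof (rule char_mat_resolvent_estimate[OF adm om _ centred_input_column_sum[OF admissibleD(2)[OF adm] k]])
    fix i assume i: "i < n"
    show "(\<Sum>j<n. char_mat n m ends w \<tau> \<omega> $$ (i,j) * ?Z $$ (j,k)) = ?Y $$ (i,k)"
      unfolding mult_mat_index_sum[OF char_mat_dims(1) Z i k, symmetric] XZ ..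
  qed
  then show ?thesis unfolding channel_gain_def centred_input_norm_def using om by simp
qed

text \<open>The majorant depends on the delay only through \<open>\<kappa>\<close>, which makes it uniform for
  dominated convergence as the delay tends to \<open>0\<close>.\<close>

lemma channel_gain_le:
  assumes adm: "admissible n m ends w \<kappa> \<tau>" and k: "k < num_channels s n m"
  shows "channel_gain s n m ends w \<tau> k \<omega> \<le>
    centred_input_norm s n m ends w k / min (\<kappa>\<^sup>2) (1/2) * inverse (1 + \<omega>\<^sup>2)"
proof (cases "\<omega> = 0")
  case True
  then show ?thesis
    using centred_input_norm_nonneg[of s n m ends w k] admissibleD(4)[OF adm] by simp
next
  case False
  define \<beta> where "\<beta> = min (\<kappa>\<^sup>2) (1/2)"
  have \<beta>: "0 < \<beta>" using admissibleD(4)[OF adm] by (simp add: \<beta>_def)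
  have "\<beta> \<le> \<kappa>\<^sup>2" and "\<beta> * \<omega>\<^sup>2 \<le> \<omega>\<^sup>2 / 2"
    using mult_right_mono[of \<beta> "1/2" "\<omega>\<^sup>2"] by (simp_all add: \<beta>_def)
  then have "\<beta> * (1 + \<omega>\<^sup>2) \<le> \<kappa>\<^sup>2 + \<omega>\<^sup>2 / 2" by (simp add: algebra_simps)
  then have "\<beta> * (1 + \<omega>\<^sup>2) * channel_gain s n m ends w \<tau> k \<omega> \<le> (\<kappa>\<^sup>2 + \<omega>\<^sup>2 / 2) * channel_gain s n m ends w \<tau> k \<omega>"
    by (rule mult_right_mono[OF _ channel_gain_nonneg])
  also have "\<dots> \<le> centred_input_norm s n m ends w k" by (rule channel_gain_estimate[OF adm False k])
  finally show ?thesis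
    using \<beta> by (simp add: \<beta>_def[symmetric] field_simps add_pos_nonneg)
qed

lemma channel_gain_eq_sum:
  assumes d: "det (char_mat n m ends w \<tau> \<omega>) \<noteq> 0" and om: "\<omega> \<noteq> 0" and k: "k < num_channels s n m"
  shows "channel_gain s n m ends w \<tau> k \<omega> =
    (\<Sum>i<n. (cmod (\<Sum>l<n. char_mat_inv n m ends w \<tau> \<omega> $$ (i,l) * centred_input s n m ends w $$ (l,k)))\<^sup>2)"
proof -
  obtain R where "mat_inverse (char_mat n m ends w \<tau> \<omega>) = Some R" "R \<in> carrier_mat n n"
    by (rule mat_inverse_eq_Some[OF char_mat_dims(1) d])
  then have R: "char_mat_inv n m ends w \<tau> \<omega> \<in> carrier_mat n n" by (simp add: char_mat_inv_def)
  show ?thesis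
    unfolding channel_gain_def using om mult_mat_index_sum[OF R centred_input_carrier _ k] by simp
qed

lemma tendsto_char_mat_index:
  assumes "(\<tau>f \<longlongrightarrow> \<tau>0) F" and "(\<omega>f \<longlongrightarrow> \<omega>0) F" and "i < n" and "j < n"
  shows "((\<lambda>t. char_mat n m ends w (\<tau>f t) (\<omega>f t) $$ (i,j)) \<longlongrightarrow> char_mat n m ends w \<tau>0 \<omega>0 $$ (i,j)) F"
  unfolding char_mat_index[OF assms(3,4)]
  by (cases "i = j") (simp_all, (intro tendsto_intros assms(1,2))+)

lemma tendsto_channel_gain:
  assumes adm: "admissible n m ends w \<kappa> \<tau>0" and om: "\<omega>0 \<noteq> 0" and k: "k < num_channels s n m"
    and tf: "(\<tau>f \<longlongrightarrow> \<tau>0) F" and wf: "(\<omega>f \<longlongrightarrow> \<omega>0) F"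
  shows "((\<lambda>t. channel_gain s n m ends w (\<tau>f t) k (\<omega>f t)) \<longlongrightarrow> channel_gain s n m ends w \<tau>0 k \<omega>0) F"
proof -
  let ?X = "\<lambda>t. char_mat n m ends w (\<tau>f t) (\<omega>f t)" and ?Xlim = "char_mat n m ends w \<tau>0 \<omega>0"
  let ?Y = "centred_input s n m ends w"
  have lim: "\<And>i j. i < n \<Longrightarrow> j < n \<Longrightarrow> ((\<lambda>t. ?X t $$ (i,j)) \<longlongrightarrow> ?Xlim $$ (i,j)) F"
    by (rule tendsto_char_mat_index[OF tf wf])
  have d0: "det ?Xlim \<noteq> 0" by (rule det_char_mat_nonzero[OF adm om])
  have ev: "eventually (\<lambda>t. det (?X t) \<noteq> 0 \<and> \<omega>f t \<noteq> 0) F"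
    using tendsto_imp_eventually_ne[OF tendsto_det_mat[OF char_mat_dims(1) char_mat_dims(1) lim] d0]
      tendsto_imp_eventually_ne[OF wf om]
    by (rule eventually_conj)
  have "((\<lambda>t. \<Sum>i<n. (cmod (\<Sum>l<n. char_mat_inv n m ends w (\<tau>f t) (\<omega>f t) $$ (i,l) * ?Y $$ (l,k)))\<^sup>2)
      \<longlongrightarrow> (\<Sum>i<n. (cmod (\<Sum>l<n. char_mat_inv n m ends w \<tau>0 \<omega>0 $$ (i,l) * ?Y $$ (l,k)))\<^sup>2)) F"
    unfolding char_mat_inv_def
    by (intro tendsto_intros tendsto_mat_inverse_index[OF char_mat_dims(1) char_mat_dims(1) lim d0]) auto
  moreover have "eventually (\<lambda>t. (\<Sum>i<n. (cmod (\<Sum>l<n. char_mat_inv n m ends w (\<tau>f t) (\<omega>f t) $$ (i,l) *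
      ?Y $$ (l,k)))\<^sup>2) = channel_gain s n m ends w (\<tau>f t) k (\<omega>f t)) F"
    using ev by eventually_elim (simp add: channel_gain_eq_sum[OF _ _ k])
  ultimately show ?thesis
    unfolding channel_gain_eq_sum[OF d0 om k] by (rule Lim_transform_eventually)
qed

lemma channel_gain_borel:
  assumes adm: "admissible n m ends w \<kappa> \<tau>" and k: "k < num_channels s n m"
  shows "channel_gain s n m ends w \<tau> k \<in> borel_measurable lborel"
proof -
  have "continuous_on (- {0}) (channel_gain s n m ends w \<tau> k)"
  proof (intro continuous_at_imp_continuous_on ballI)
    fix x :: real assume "x \<in> - {0}"
    then have "((\<lambda>t. channel_gain s n m ends w \<tau> k t) \<longlongrightarrow> channel_gain s n m ends w \<tau> k x) (at x)"
      by (intro tendsto_channel_gain[OF adm _ k] tendsto_ident_at tendsto_const) auto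
    then show "isCont (channel_gain s n m ends w \<tau> k) x" by (simp add: isCont_def)
  qed
  then have "(\<lambda>x. if x \<in> - {0} then channel_gain s n m ends w \<tau> k x else 0) \<in> borel_measurable borel"
    by (intro borel_measurable_continuous_on_if) auto
  moreover have "(\<lambda>x. if x \<in> - {0} then channel_gain s n m ends w \<tau> k x else 0) = channel_gain s n m ends w \<tau> k"
    by auto
  ultimately show ?thesis by simp
qed

lemma integrable_inverse_1_plus_square_lborel: "integrable lborel (\<lambda>x::real. inverse (1 + x\<^sup>2))"
  using integrable_inverse_1_plus_square unfolding set_integrable_def by simp

lemma integrable_channel_gain:
  assumes adm: "admissible n m ends w \<kappa> \<tau>" and k: "k < num_channels s n m"
  shows "integrable lborel (channel_gain s n m ends w \<tau> k)"
proof (rule Bochner_Integration.integrable_bound)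
  let ?C = "centred_input_norm s n m ends w k / min (\<kappa>\<^sup>2) (1/2)"
  show "integrable lborel (\<lambda>x. ?C * inverse (1 + x\<^sup>2))"
    using integrable_inverse_1_plus_square_lborel by simp
  show "channel_gain s n m ends w \<tau> k \<in> borel_measurable lborel" by (rule channel_gain_borel[OF adm k])
  show "AE x in lborel. norm (channel_gain s n m ends w \<tau> k x) \<le> norm (?C * inverse (1 + x\<^sup>2))"
    using channel_gain_le[OF adm k] channel_gain_nonneg[of s n m ends w \<tau> k]
    by (intro AE_I2) (metis abs_of_nonneg order_trans real_norm_def)
qed

definition channel_energy :: "uncertainty \<Rightarrow> nat \<Rightarrow> nat \<Rightarrow> (nat \<Rightarrow> nat \<times> nat) \<Rightarrow> (nat \<Rightarrow> real) \<Rightarrow> real \<Rightarrow> nat \<Rightarrow> real" where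
  "channel_energy s n m ends w \<tau> k = integral\<^sup>L lborel (channel_gain s n m ends w \<tau> k)"

lemma rho_ss_eq_sum:
  assumes adm: "admissible n m ends w \<kappa> \<tau>"
  shows "rho_ss s n m ends w \<tau> \<sigma> = 1 / (2 * pi) * (\<Sum>k<num_channels s n m. (\<sigma> k)\<^sup>2 * channel_energy s n m ends w \<tau> k)"
proof -
  define G where "G = (\<lambda>\<omega>. \<Sum>k<num_channels s n m. (\<sigma> k)\<^sup>2 * channel_gain s n m ends w \<tau> k \<omega>)"
  have G: "integrable lborel G"
    unfolding G_def by (intro Bochner_Integration.integrable_sum Bochner_Integration.integrable_mult_right
        integrable_channel_gain[OF adm]) simp
  have "integral UNIV (\<lambda>\<omega>::real. Re (mtrace (conj_transpose (transfer s n m ends w \<tau> \<sigma> \<omega>) *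
      transfer s n m ends w \<tau> \<sigma> \<omega>))) = integral UNIV G"
    by (rule integral_spike[of "{0}"]) (auto simp: G_def transfer_trace_eq[OF adm])
  also have "\<dots> = integral\<^sup>L lborel G" using G by (rule integral_lborel)
  also have "\<dots> = (\<Sum>k<num_channels s n m. (\<sigma> k)\<^sup>2 * channel_energy s n m ends w \<tau> k)"
    unfolding G_def channel_energy_def
    by (subst Bochner_Integration.integral_sum) (auto intro: integrable_channel_gain[OF adm])
  finally show ?thesis unfolding rho_ss_def by simp
qed

text \<open>By \<open>rho_ss_eq_sum\<close> the performance is affine in \<open>\<sigma>\<^sub>k\<^sup>2\<close>, with slope \<open>channel_energy / (2 \<pi>)\<close>.\<close>

lemma centrality_eq_channel_energy:
  assumes adm: "admissible n m ends w \<kappa> \<tau>" and k: "k < num_channels s n m"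
  shows "centrality s n m ends w \<tau> k = channel_energy s n m ends w \<tau> k / (2 * pi)"
proof -
  let ?I = "channel_energy s n m ends w \<tau>"
  define A where "A = (\<Sum>j<num_channels s n m. ?I j)"
  have eq: "rho_ss s n m ends w \<tau> ((\<lambda>_. 1)(k := sqrt v)) = 1 / (2 * pi) * (A + (v - 1) * ?I k)"
    if v: "v \<in> {0<..}" for v :: real
  proof -
    have "(\<Sum>j<num_channels s n m. (((\<lambda>_. 1)(k := sqrt v)) j)\<^sup>2 * ?I j) =
        (\<Sum>j<num_channels s n m. ?I j + (if j = k then (v - 1) * ?I j else 0))"
      using v by (intro sum.cong refl) (auto simp: algebra_simps)
    also have "\<dots> = A + (v - 1) * ?I k"
      using k by (simp add: sum.distrib A_def)
    finally show ?thesis by (simp add: rho_ss_eq_sum[OF adm])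
  qed
  have "((\<lambda>v. 1 / (2 * pi) * (A + (v - 1) * ?I k)) has_field_derivative 1 / (2 * pi) * ?I k) (at 1)"
    by (auto intro!: derivative_eq_intros)
  then have "((\<lambda>v. rho_ss s n m ends w \<tau> ((\<lambda>_. 1)(k := sqrt v))) has_field_derivative 1 / (2 * pi) * ?I k) (at 1)"
    by (rule has_field_derivative_transform_within_open[of _ _ _ "{0<..}"]) (auto simp: eq)
  then show ?thesis unfolding centrality_def by (simp add: DERIV_imp_deriv)
qed

section \<open>Scaling the weights\<close>

definition input_scaling_exponent :: "uncertainty \<Rightarrow> nat" where
  "input_scaling_exponent s = (if s = Dynamics \<or> s = Measurement then 0 else 1)"

lemma degree_mat_scale: "degree_mat n m ends (\<lambda>e. \<alpha> * w e) = \<alpha> \<cdot>\<^sub>m degree_mat n m ends w"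
  by (rule eq_matI) (auto simp: degree_mat_def mat_diag_def sum_distrib_left mult_delta_right cong: if_cong)

lemma noise_input_scale:
  "noise_input s n m ends (\<lambda>e. \<alpha> * w e) = \<alpha> ^ input_scaling_exponent s \<cdot>\<^sub>m noise_input s n m ends w"
proof (cases s)
  case Emitter
  then show ?thesis
    by (auto simp: noise_input_def input_scaling_exponent_def degree_mat_scale laplacian_scale
        adjacency_mat_def algebra_simps intro!: eq_matI)
next
  case Communication
  then show ?thesis
    by (auto simp: noise_input_def input_scaling_exponent_def weight_mat_def mat_diag_def scalar_prod_def
        mult_delta_right cong: if_cong intro!: eq_matI)
qed (auto simp: noise_input_def input_scaling_exponent_def laplacian_scale degree_mat_scale intro!: eq_matI)

lemma centred_input_scale:
  "centred_input s n m ends (\<lambda>e. \<alpha> * w e) =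
    complex_of_real (\<alpha> ^ input_scaling_exponent s) \<cdot>\<^sub>m centred_input s n m ends w"
proof -
  have "cmat (centering n) \<in> carrier_mat n n" by (simp add: carrier_matI)
  moreover have "cmat (noise_input s n m ends w) \<in> carrier_mat n (num_channels s n m)"
    using noise_input_carrier[of s n m ends w] by (intro carrier_matI) (simp_all add: carrier_matD)
  ultimately show ?thesis
    unfolding centred_input_def noise_input_scale cmat_smult by (rule mult_smult_distrib)
qed

lemma char_mat_scale:
  assumes a: "\<alpha> \<noteq> 0"
  shows "char_mat n m ends (\<lambda>e. \<alpha> * w e) \<tau> \<omega> = complex_of_real \<alpha> \<cdot>\<^sub>m char_mat n m ends w (\<alpha> * \<tau>) (\<omega> / \<alpha>)"
proof (rule eq_matI)
  fix i j assume "i < dim_row (complex_of_real \<alpha> \<cdot>\<^sub>m char_mat n m ends w (\<alpha> * \<tau>) (\<omega> / \<alpha>))"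
    "j < dim_col (complex_of_real \<alpha> \<cdot>\<^sub>m char_mat n m ends w (\<alpha> * \<tau>) (\<omega> / \<alpha>))"
  then have i: "i < n" and j: "j < n" by auto
  have delay: "complex_of_real (\<alpha> * \<tau>) * (\<i> * complex_of_real (\<omega> / \<alpha>)) = complex_of_real \<tau> * (\<i> * complex_of_real \<omega>)"
    and freq: "complex_of_real \<alpha> * (\<i> * complex_of_real (\<omega> / \<alpha>)) = \<i> * complex_of_real \<omega>"
    using a by (simp_all add: field_simps)
  show "char_mat n m ends (\<lambda>e. \<alpha> * w e) \<tau> \<omega> $$ (i,j) =
      (complex_of_real \<alpha> \<cdot>\<^sub>m char_mat n m ends w (\<alpha> * \<tau>) (\<omega> / \<alpha>)) $$ (i,j)"
    using a i j by (simp add: char_mat_index laplacian_scale delay freq distrib_left mult_ac)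
qed auto

lemma channel_gain_scale:
  assumes adm: "admissible n m ends w \<kappa> (\<alpha> * \<tau>)" and a: "0 < \<alpha>" and k: "k < num_channels s n m"
  shows "channel_gain s n m ends (\<lambda>e. \<alpha> * w e) \<tau> k \<omega> =
    (\<alpha> ^ input_scaling_exponent s / \<alpha>)\<^sup>2 * channel_gain s n m ends w (\<alpha> * \<tau>) k (\<omega> / \<alpha>)"
proof (cases "\<omega> = 0")
  case False
  then have om: "\<omega> / \<alpha> \<noteq> 0" using a by simp
  let ?c = "\<alpha> ^ input_scaling_exponent s / \<alpha>"
  let ?P = "char_mat_inv n m ends w (\<alpha> * \<tau>) (\<omega> / \<alpha>) * centred_input s n m ends w"
  have R: "char_mat_inv n m ends w (\<alpha> * \<tau>) (\<omega> / \<alpha>) \<in> carrier_mat n n" by (rule char_mat_inv(3)[OF adm om])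
  have "char_mat_inv n m ends (\<lambda>e. \<alpha> * w e) \<tau> \<omega> =
      inverse (complex_of_real \<alpha>) \<cdot>\<^sub>m char_mat_inv n m ends w (\<alpha> * \<tau>) (\<omega> / \<alpha>)"
    unfolding char_mat_inv_def char_mat_scale[OF less_imp_neq[OF a, symmetric]]
    by (rule mat_inverse_smult[OF char_mat_dims(1) det_char_mat_nonzero[OF adm om]]) (use a in simp)
  then have "char_mat_inv n m ends (\<lambda>e. \<alpha> * w e) \<tau> \<omega> * centred_input s n m ends (\<lambda>e. \<alpha> * w e) =
      complex_of_real ?c \<cdot>\<^sub>m ?P"
  proof -
    have "(inverse (complex_of_real \<alpha>) \<cdot>\<^sub>m char_mat_inv n m ends w (\<alpha> * \<tau>) (\<omega> / \<alpha>)) *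
        (complex_of_real (\<alpha> ^ input_scaling_exponent s) \<cdot>\<^sub>m centred_input s n m ends w) =
        (inverse (complex_of_real \<alpha>) * complex_of_real (\<alpha> ^ input_scaling_exponent s)) \<cdot>\<^sub>m ?P"
      using R centred_input_carrier[of s n m ends w]
      by (intro eq_matI) (auto simp: scalar_prod_def sum_distrib_left mult_ac)
    moreover have "inverse (complex_of_real \<alpha>) * complex_of_real (\<alpha> ^ input_scaling_exponent s) = complex_of_real ?c"
      by (simp add: divide_inverse mult.commute)
    ultimately show ?thesis using \<open>char_mat_inv n m ends (\<lambda>e. \<alpha> * w e) \<tau> \<omega> = _\<close>
      unfolding centred_input_scale by simp
  qed
  then have "channel_gain s n m ends (\<lambda>e. \<alpha> * w e) \<tau> k \<omega> = (\<Sum>i<n. (cmod (complex_of_real ?c * ?P $$ (i,k)))\<^sup>2)"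
    using False k R unfolding channel_gain_def by (simp add: carrier_matD)
  also have "\<dots> = (\<Sum>i<n. ?c\<^sup>2 * (cmod (?P $$ (i,k)))\<^sup>2)"
    by (intro sum.cong refl) (simp only: norm_mult norm_of_real power_mult_distrib power2_abs)
  also have "\<dots> = ?c\<^sup>2 * (\<Sum>i<n. (cmod (?P $$ (i,k)))\<^sup>2)"
    by (simp add: sum_distrib_left)
  finally show ?thesis using om by (simp add: channel_gain_def)
qed simp

lemma channel_energy_scale:
  assumes adm: "admissible n m ends w \<kappa> (\<alpha> * \<tau>)" and a: "0 < \<alpha>" and k: "k < num_channels s n m"
  shows "channel_energy s n m ends (\<lambda>e. \<alpha> * w e) \<tau> k =
    (\<alpha> ^ input_scaling_exponent s / \<alpha>)\<^sup>2 * \<alpha> * channel_energy s n m ends w (\<alpha> * \<tau>) k"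
proof -
  let ?f = "channel_gain s n m ends w (\<alpha> * \<tau>) k"
  have "channel_energy s n m ends (\<lambda>e. \<alpha> * w e) \<tau> k =
      (\<alpha> ^ input_scaling_exponent s / \<alpha>)\<^sup>2 * (\<integral>\<omega>. ?f (\<omega> / \<alpha>) \<partial>lborel)"
    unfolding channel_energy_def channel_gain_scale[OF adm a k] by simp
  also have "(\<integral>\<omega>. ?f (\<omega> / \<alpha>) \<partial>lborel) = \<bar>\<alpha>\<bar> *\<^sub>R (\<integral>x. ?f ((0 + \<alpha> * x) / \<alpha>) \<partial>lborel)"
    by (rule lborel_integral_real_affine) (use a in simp)
  also have "\<dots> = \<alpha> * channel_energy s n m ends w (\<alpha> * \<tau>) k" using a by (simp add: channel_energy_def)
  finally show ?thesis by (simp add: mult_ac)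
qed

lemma admissible_scale:
  assumes adm: "admissible n m ends w \<kappa> (\<alpha> * \<tau>)" and a: "0 < \<alpha>"
  shows "admissible n m ends (\<lambda>e. \<alpha> * w e) (\<alpha> * \<kappa>) \<tau>"
proof -
  have "0 \<le> \<alpha> * \<tau>" and "\<alpha> * \<tau> * (2 * (\<Sum>e<m. w e)) \<le> 1/4" using admissibleD(6,7)[OF adm] .
  then have "0 \<le> \<tau>" and "\<tau> * (2 * (\<Sum>e<m. \<alpha> * w e)) \<le> 1/4"
    using a by (simp_all add: zero_le_mult_iff sum_distrib_left[symmetric] mult_ac)
  moreover have "\<alpha> * \<kappa> * (\<Sum>i<n. (cmod (x i))\<^sup>2) \<le> edge_energy m ends (\<lambda>e. \<alpha> * w e) x"
    if "(\<Sum>i<n. x i) = 0" for x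
    using mult_left_mono[OF admissibleD(5)[OF adm that], of \<alpha>] a by (simp add: edge_energy_scale mult_ac)
  ultimately show ?thesis
    using admissibleD(1-4)[OF adm] a unfolding admissible_def by simp
qed

lemma centrality_scale:
  assumes adm: "admissible n m ends w \<kappa> (\<alpha> * \<tau>)" and a: "0 < \<alpha>" and k: "k < num_channels s n m"
  shows "centrality s n m ends (\<lambda>e. \<alpha> * w e) \<tau> k =
    (\<alpha> ^ input_scaling_exponent s / \<alpha>)\<^sup>2 * \<alpha> * centrality s n m ends w (\<alpha> * \<tau>) k"
  unfolding centrality_eq_channel_energy[OF admissible_scale[OF adm a] k] centrality_eq_channel_energy[OF adm k]
    channel_energy_scale[OF adm a k] by simp

section \<open>Vanishing delay\<close>

lemma tendsto_channel_energy_zero_delay: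
  assumes adm: "\<And>t. 0 \<le> t \<Longrightarrow> t \<le> \<delta> \<Longrightarrow> admissible n m ends w \<kappa> t"
    and \<delta>: "0 < \<delta>" and \<tau>: "0 < \<tau>" and k: "k < num_channels s n m"
  shows "((\<lambda>\<alpha>. channel_energy s n m ends w (\<alpha> * \<tau>) k) \<longlongrightarrow> channel_energy s n m ends w 0 k) (at_right 0)"
proof (rule tendsto_at_right_sequentially[where b = "\<delta> / \<tau>"])
  show "0 < \<delta> / \<tau>" using \<delta> \<tau> by simp
  fix S :: "nat \<Rightarrow> real"
  assume S: "\<And>i. 0 < S i" "\<And>i. S i < \<delta> / \<tau>" "decseq S" "S \<longlonglongrightarrow> 0"
  have adm_S: "admissible n m ends w \<kappa> (S i * \<tau>)" for i
    using S(1,2)[of i] \<tau> by (intro adm) (simp_all add: pos_less_divide_eq less_imp_le)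
  have adm_0: "admissible n m ends w \<kappa> 0" using adm \<delta> by simp
  define C where "C = centred_input_norm s n m ends w k / min (\<kappa>\<^sup>2) (1/2)"
  have "(\<lambda>i. integral\<^sup>L lborel (channel_gain s n m ends w (S i * \<tau>) k)) \<longlonglongrightarrow>
      integral\<^sup>L lborel (channel_gain s n m ends w 0 k)"
  proof (rule integral_dominated_convergence[where w = "\<lambda>x. C * inverse (1 + x\<^sup>2)"])
    show "channel_gain s n m ends w 0 k \<in> borel_measurable lborel"
      by (rule channel_gain_borel[OF adm_0 k])
    show "channel_gain s n m ends w (S i * \<tau>) k \<in> borel_measurable lborel" for i
      by (rule channel_gain_borel[OF adm_S k])
    show "integrable lborel (\<lambda>x. C * inverse (1 + x\<^sup>2))"
      using integrable_inverse_1_plus_square_lborel by simp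
    have S\<tau>: "(\<lambda>i. S i * \<tau>) \<longlonglongrightarrow> 0" using tendsto_mult_left_zero[OF S(4)] by simp
    show "AE x in lborel. (\<lambda>i. channel_gain s n m ends w (S i * \<tau>) k x) \<longlonglongrightarrow> channel_gain s n m ends w 0 k x"
      using AE_lborel_singleton[of 0]
    proof (rule AE_mp, intro AE_I2 impI)
      fix x :: real assume "x \<noteq> 0"
      from tendsto_channel_gain[OF adm_0 this k S\<tau>, where \<omega>f = "\<lambda>_. x"]
      show "(\<lambda>i. channel_gain s n m ends w (S i * \<tau>) k x) \<longlonglongrightarrow> channel_gain s n m ends w 0 k x" by simp
    qed
    show "AE x in lborel. norm (channel_gain s n m ends w (S i * \<tau>) k x) \<le> C * inverse (1 + x\<^sup>2)" for i
      using channel_gain_le[OF adm_S k] channel_gain_nonneg unfolding C_def by (intro AE_I2) simp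
  qed
  then show "(\<lambda>i. channel_energy s n m ends w (S i * \<tau>) k) \<longlonglongrightarrow> channel_energy s n m ends w 0 k"
    unfolding channel_energy_def .
qed

lemma tendsto_centrality_zero_delay:
  assumes adm: "\<And>t. 0 \<le> t \<Longrightarrow> t \<le> \<delta> \<Longrightarrow> admissible n m ends w \<kappa> t"
    and \<delta>: "0 < \<delta>" and \<tau>: "0 < \<tau>" and k: "k < num_channels s n m"
  shows "((\<lambda>\<alpha>. centrality s n m ends w (\<alpha> * \<tau>) k) \<longlongrightarrow> centrality s n m ends w 0 k) (at_right 0)"
proof -
  have "eventually (\<lambda>\<alpha>. \<alpha> \<in> {0<..<\<delta> / \<tau>}) (at_right (0::real))"
    by (rule eventually_at_right_real) (use \<delta> \<tau> in simp)
  then have "eventually (\<lambda>\<alpha>. channel_energy s n m ends w (\<alpha> * \<tau>) k / (2 * pi) =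
      centrality s n m ends w (\<alpha> * \<tau>) k) (at_right 0)"
  proof eventually_elim
    case (elim \<alpha>)
    then have "admissible n m ends w \<kappa> (\<alpha> * \<tau>)"
      using \<tau> by (intro adm) (simp_all add: pos_less_divide_eq less_imp_le)
    then show ?case by (simp add: centrality_eq_channel_energy[OF _ k])
  qed
  moreover have "((\<lambda>\<alpha>. channel_energy s n m ends w (\<alpha> * \<tau>) k / (2 * pi)) \<longlongrightarrow>
      channel_energy s n m ends w 0 k / (2 * pi)) (at_right 0)"
    by (intro tendsto_divide tendsto_const tendsto_channel_energy_zero_delay[OF adm \<delta> \<tau> k]) (use pi_gt_zero in simp_all)
  ultimately show ?thesis
    using centrality_eq_channel_energy[OF adm[OF order.refl less_imp_le[OF \<delta>]] k]
    by (simp add: Lim_transform_eventually)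
qed

lemma admissible_small_delays:
  assumes g: "connected_weighted_graph n m ends w"
  obtains \<kappa> \<delta> where "0 < \<delta>" "\<And>t. 0 \<le> t \<Longrightarrow> t \<le> \<delta> \<Longrightarrow> admissible n m ends w \<kappa> t"
proof -
  have v: "valid_graph n m ends" and n: "0 < n" and w: "\<And>e. e < m \<Longrightarrow> 0 \<le> w e"
    using g unfolding connected_weighted_graph_def valid_graph_def by (auto intro: less_imp_le)
  obtain \<kappa> where \<kappa>: "0 < \<kappa>"
    "\<forall>x. (\<Sum>i<n. x i) = 0 \<longrightarrow> \<kappa> * (\<Sum>i<n. (cmod (x i))\<^sup>2) \<le> edge_energy m ends w x"
    using edge_energy_coercive[OF g] by blast
  define W where "W = (\<Sum>e<m. w e)"
  have W: "0 \<le> W" unfolding W_def using w by (intro sum_nonneg) auto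
  have "admissible n m ends w \<kappa> t" if "0 \<le> t" "t \<le> 1 / (8 * W + 1)" for t
  proof -
    have "t * (2 * W) \<le> 1 / (8 * W + 1) * (2 * W)" using that W by (intro mult_right_mono) auto
    also have "\<dots> \<le> 1/4" using W by (simp add: field_simps)
    finally show ?thesis unfolding admissible_def W_def using v n w \<kappa> that by auto
  qed
  moreover have "0 < 1 / (8 * W + 1)" using W by simp
  ultimately show ?thesis using that by blast
qed

lemma admissible_eigenvalue_bound:
  assumes adm: "admissible n m ends w \<kappa> \<tau>" and ev: "eigenvalue (laplacian n m ends w) \<mu>"
  shows "\<tau> * \<mu> < pi / 2"
proof -
  have "\<tau> * \<mu> \<le> \<tau> * (2 * (\<Sum>e<m. w e))"
    using laplacian_eigenvalue_le[OF admissibleD(1,3)[OF adm] ev] admissibleD(6)[OF adm]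
    by (rule mult_left_mono)
  also have "\<dots> \<le> 1/4" by (rule admissibleD(7)[OF adm])
  also have "\<dots> < pi / 2" using pi_gt3 by simp
  finally show ?thesis .
qed

section \<open>Preservation of the ranking\<close>

lemma eventually_strict_order_preserved:
  fixes f :: "nat \<Rightarrow> 'a \<Rightarrow> real"
  assumes lim: "\<And>k. k < K \<Longrightarrow> ((\<lambda>x. f k x) \<longlongrightarrow> c k) F"
  shows "eventually (\<lambda>x. \<forall>i<K. \<forall>j<K. c j < c i \<longrightarrow> f j x < f i x) F"
proof -
  have "eventually (\<lambda>x. c j < c i \<longrightarrow> f j x < f i x) F" if "i < K" "j < K" for i j
  proof (cases "c j < c i")
    case True
    have "((\<lambda>x. f i x - f j x) \<longlongrightarrow> c i - c j) F" by (intro tendsto_diff lim that)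
    then have "eventually (\<lambda>x. 0 < f i x - f j x) F" using True by (intro order_tendstoD(1)) auto
    then show ?thesis by eventually_elim simp
  qed simp
  then have "eventually (\<lambda>x. \<forall>p\<in>{..<K} \<times> {..<K}. c (snd p) < c (fst p) \<longrightarrow> f (snd p) x < f (fst p) x) F"
    by (intro eventually_ball_finite) auto
  then show ?thesis by eventually_elim auto
qed

lemma strict_rank_order_transfer:
  fixes f g :: "nat \<Rightarrow> real"
  assumes f: "\<forall>i<N. \<forall>j<N. f i > f j \<longleftrightarrow> i < j"
    and fg: "\<forall>i<N. \<forall>j<N. f j < f i \<longrightarrow> g j < g i"
  shows "\<forall>i<N. \<forall>j<N. g i > g j \<longleftrightarrow> i < j"
proof (intro allI impI)
  fix i j assume i: "i < N" and j: "j < N"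
  show "g i > g j \<longleftrightarrow> i < j"
  proof (cases i j rule: linorder_cases)
    case greater
    then have "g j > g i" using f fg i j by auto
    then show ?thesis using greater by auto
  qed (use f fg i j in auto)
qed

text \<open>The channels of \<open>(\<alpha> w, \<tau>)\<close> are those of \<open>(w, \<alpha> \<tau>)\<close> times one positive factor.\<close>

lemma eventually_scaled_centrality_order:
  assumes adm: "\<And>t. 0 \<le> t \<Longrightarrow> t \<le> \<delta> \<Longrightarrow> admissible n m ends w \<kappa> t"
    and \<delta>: "0 < \<delta>" and \<tau>: "0 < \<tau>"
  shows "eventually (\<lambda>\<alpha>. 0 < \<alpha> \<and> admissible n m ends w \<kappa> (\<alpha> * \<tau>) \<and>
    (\<forall>i<num_channels s n m. \<forall>j<num_channels s n m.
       centrality s n m ends w 0 j < centrality s n m ends w 0 i \<longrightarrow>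
       centrality s n m ends (\<lambda>e. \<alpha> * w e) \<tau> j < centrality s n m ends (\<lambda>e. \<alpha> * w e) \<tau> i)) (at_right 0)"
proof -
  have "eventually (\<lambda>\<alpha>. \<alpha> \<in> {0<..<\<delta> / \<tau>}) (at_right (0::real))"
    by (rule eventually_at_right_real) (use \<delta> \<tau> in simp)
  moreover have "eventually (\<lambda>\<alpha>. \<forall>i<num_channels s n m. \<forall>j<num_channels s n m. centrality s n m ends w 0 j < centrality s n m ends w 0 i \<longrightarrow>
      centrality s n m ends w (\<alpha> * \<tau>) j < centrality s n m ends w (\<alpha> * \<tau>) i) (at_right 0)"
    by (intro eventually_strict_order_preserved tendsto_centrality_zero_delay[OF adm \<delta> \<tau>])
  ultimately show ?thesis
  proof eventually_elim
    case (elim \<alpha>)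
    then have \<alpha>: "0 < \<alpha>" and adm_\<alpha>: "admissible n m ends w \<kappa> (\<alpha> * \<tau>)"
      using \<tau> by (auto intro!: adm simp: pos_less_divide_eq less_imp_le)
    have "0 < (\<alpha> ^ input_scaling_exponent s / \<alpha>)\<^sup>2 * \<alpha>" using \<alpha> by simp
    then show ?case
      using elim \<alpha> adm_\<alpha> by (simp add: centrality_scale[OF adm_\<alpha> \<alpha>])
  qed
qed

theorem theorem12:
  fixes n m :: nat and ends :: "nat \<Rightarrow> nat \<times> nat" and w :: "nat \<Rightarrow> real"
    and s :: uncertainty and \<tau> :: real
  assumes graph: "connected_weighted_graph n m ends w"
    and tau_pos: "0 < \<tau>"
    and agents0: "agent_associated s \<Longrightarrow>
      \<forall>i<n. \<forall>j<n. centrality s n m ends w 0 i > centrality s n m ends w 0 j \<longleftrightarrow> i < j"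
    and links0: "link_associated s \<Longrightarrow>
      \<forall>e<m. \<forall>f<m. centrality s n m ends w 0 e > centrality s n m ends w 0 f \<longleftrightarrow> e < f"
  shows "\<exists>\<alpha>>0.
     (\<forall>\<mu>. eigenvalue (laplacian n m ends (\<lambda>e. \<alpha> * w e)) \<mu> \<longrightarrow> \<tau> * \<mu> < pi / 2) \<and>
     (agent_associated s \<longrightarrow>
        (\<forall>i<n. \<forall>j<n. centrality s n m ends (\<lambda>e. \<alpha> * w e) \<tau> i
                       > centrality s n m ends (\<lambda>e. \<alpha> * w e) \<tau> j \<longleftrightarrow> i < j)) \<and>
     (link_associated s \<longrightarrow>
        (\<forall>e<m. \<forall>f<m. centrality s n m ends (\<lambda>e. \<alpha> * w e) \<tau> e
                       > centrality s n m ends (\<lambda>e. \<alpha> * w e) \<tau> f \<longleftrightarrow> e < f))"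
proof -
  obtain \<kappa> \<delta> where \<delta>: "0 < \<delta>" and adm: "\<And>t. 0 \<le> t \<Longrightarrow> t \<le> \<delta> \<Longrightarrow> admissible n m ends w \<kappa> t"
    using admissible_small_delays[OF graph] by blast
  obtain \<alpha> where \<alpha>: "0 < \<alpha>" and adm_\<alpha>: "admissible n m ends w \<kappa> (\<alpha> * \<tau>)"
    and order: "\<forall>i<num_channels s n m. \<forall>j<num_channels s n m.
      centrality s n m ends w 0 j < centrality s n m ends w 0 i \<longrightarrow>
      centrality s n m ends (\<lambda>e. \<alpha> * w e) \<tau> j < centrality s n m ends (\<lambda>e. \<alpha> * w e) \<tau> i"
    using eventually_happens'[OF _ eventually_scaled_centrality_order[OF adm \<delta> tau_pos, of s]] by auto
  let ?c = "centrality s n m ends (\<lambda>e. \<alpha> * w e) \<tau>"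
  have "\<forall>\<mu>. eigenvalue (laplacian n m ends (\<lambda>e. \<alpha> * w e)) \<mu> \<longrightarrow> \<tau> * \<mu> < pi / 2"
    using admissible_eigenvalue_bound[OF admissible_scale[OF adm_\<alpha> \<alpha>]] by blast
  moreover have "agent_associated s \<longrightarrow> (\<forall>i<n. \<forall>j<n. ?c i > ?c j \<longleftrightarrow> i < j)"
  proof
    assume s: "agent_associated s"
    show "\<forall>i<n. \<forall>j<n. ?c i > ?c j \<longleftrightarrow> i < j"
      by (rule strict_rank_order_transfer[OF agents0[OF s]])
        (use order s in \<open>simp add: num_channels_agent_associated\<close>)
  qed
  moreover have "link_associated s \<longrightarrow> (\<forall>e<m. \<forall>f<m. ?c e > ?c f \<longleftrightarrow> e < f)"
  proof
    assume s: "link_associated s"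
    show "\<forall>e<m. \<forall>f<m. ?c e > ?c f \<longleftrightarrow> e < f"
      by (rule strict_rank_order_transfer[OF links0[OF s]]) (use order s in \<open>simp add: num_channels_def\<close>)
  qed
  ultimately show ?thesis using \<alpha> by blast
qed

end
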